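(* Let $\Omega\subset\mathbb{R}^2$ be a bounded smooth domain, $\phi\in W^{1,\infty}(\Omega)$, $\chi>0$, $r\in\mathbb{R}$, $\mu>0$, and let $(n,w,u,P)$ be a global classical solution of \[ \begin{cases} n_t+u\cdot\nabla n=\Delta n+\chi\nabla\cdot(n\nabla w)+n(r-\mu n), & x\in\Omega,\ t>0,\\ w_t+u\cdot\nabla w=\Delta w-|\nabla w|^2+n, & x\in\Omega,\ t>0,\\ u_t+(u\cdot\nabla)u=\Delta u+\nabla P+n\nabla\phi,\quad \nabla\cdot u=0, & x\in\Omega,\ t>0,\\ \nabla n\cdot\nu=\nabla w\cdot\nu=0,\ u=0, & x\in\partial\Omega,\ t>0, \end{cases} \] with $n(\cdot,0)=n_0\ge0$, $n_0\in C^0(\bar\Omega)$, $n_0\not\equiv0$, $n\ge0$, $w\ge 0$. Then (i) $\limsup_{t\to\infty}\|n(\cdot,t)\|_{L^1(\Omega)}\le\frac{|\Omega|r_+}{\mu}$; (ii) for all $t_0\ge0$ and $t>t_0$, $\int_{t_0}^t\|n(\cdot,s)\|_{L^2(\Omega)}^2ds\le\frac{r_+}{\mu}\int_{t_0}^t\|n(\cdot,s)\|_{L^1(\Omega)}ds+\frac1\mu\|n(\cdot,t_0)\|_{L^1(\Omega)}$; (iii) for all $t_0\ge0$ and $t>t_0$, $\int_{t_0}^t\int_\Omega|\nabla w|^2dxds\le\int_\Omega w(x,t_0)dx+\int_{t_0}^t\|n(\cdot,s)\|_{L^1(\Omega)}ds$. Moreover, if $r\le0$, then $\|n(\cdot,t)\|_{L^1(\Omega)}\le\frac{|\Omega|}{\mu(t+\gamma)}$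 for all $t>0$, where $\gamma=\frac{|\Omega|}{\mu\int_\Omega n_0}$.
   Context: $\nu$ denotes the outward unit normal; $r_+=\max\{r,0\}$. This system arises from the chemotaxis–Navier–Stokes system with singular sensitivity $-\chi\nabla\cdot(\frac nc\nabla c)$ and consumption $-nc$ via $w=-\ln(c/\|c_0\|_{L^\infty(\Omega)})$. *)

theory Defs
  imports "HOL-Analysis.Analysis"
begin

type_synonym pt = "real ^ 2"

definition has_pd :: "2 \<Rightarrow> (pt \<Rightarrow> real) \<Rightarrow> pt \<Rightarrow> real \<Rightarrow> bool" where
  "has_pd i g x d \<longleftrightarrow> ((\<lambda>h. g (x + h *\<^sub>R axis i 1)) has_real_derivative d) (at 0)"

definition pdiff :: "2 \<Rightarrow> (pt \<Rightarrow> real) \<Rightarrow> pt \<Rightarrow> bool" where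
  "pdiff i g x \<longleftrightarrow> (\<exists>d. has_pd i g x d)"

definition pd :: "2 \<Rightarrow> (pt \<Rightarrow> real) \<Rightarrow> pt \<Rightarrow> real" where
  "pd i g x = deriv (\<lambda>h. g (x + h *\<^sub>R axis i 1)) 0"

definition grad :: "(pt \<Rightarrow> real) \<Rightarrow> pt \<Rightarrow> pt" where
  "grad g x = (\<chi> i. pd i g x)"

definition lap :: "(pt \<Rightarrow> real) \<Rightarrow> pt \<Rightarrow> real" where
  "lap g x = (\<Sum>i\<in>UNIV. pd i (pd i g) x)"

definition divg :: "(pt \<Rightarrow> pt) \<Rightarrow> pt \<Rightarrow> real" where
  "divg F x = (\<Sum>i\<in>UNIV. pd i (\<lambda>y. F y $ i) x)"

definition dt :: "(pt \<Rightarrow> real \<Rightarrow> real) \<Rightarrow> pt \<Rightarrow> real \<Rightarrow> real" where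
  "dt f x t = deriv (\<lambda>s. f x s) t"

definition ucomp :: "(pt \<Rightarrow> real \<Rightarrow> pt) \<Rightarrow> 2 \<Rightarrow> pt \<Rightarrow> real \<Rightarrow> real" where
  "ucomp u i = (\<lambda>x t. u x t $ i)"

definition vdt :: "(pt \<Rightarrow> real \<Rightarrow> pt) \<Rightarrow> pt \<Rightarrow> real \<Rightarrow> pt" where
  "vdt u x t = (\<chi> i. dt (ucomp u i) x t)"

definition vlap :: "(pt \<Rightarrow> real \<Rightarrow> pt) \<Rightarrow> pt \<Rightarrow> real \<Rightarrow> pt" where
  "vlap u x t = (\<chi> i. lap (\<lambda>y. u y t $ i) x)"

definition conv :: "(pt \<Rightarrow> real \<Rightarrow> pt) \<Rightarrow> (pt \<Rightarrow> real \<Rightarrow> pt) \<Rightarrow> pt \<Rightarrow> real \<Rightarrow> pt" where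
  "conv u v x t = (\<chi> i. u x t \<bullet> grad (\<lambda>y. v y t $ i) x)"

definition smooth_fun :: "(pt \<Rightarrow> real) \<Rightarrow> bool" where
  "smooth_fun g \<longleftrightarrow> (\<exists>D :: 2 list \<Rightarrow> pt \<Rightarrow> real. D [] = g \<and>
     (\<forall>ks. continuous_on UNIV (D ks) \<and> (\<forall>i x. has_pd i (D ks) x (D (i # ks) x))))"

definition defining_function :: "pt set \<Rightarrow> (pt \<Rightarrow> real) \<Rightarrow> bool" where
  "defining_function \<Omega> \<rho> \<longleftrightarrow> smooth_fun \<rho> \<and> \<Omega> = {x. \<rho> x < 0} \<and>
     (\<forall>x. \<rho> x = 0 \<longrightarrow> grad \<rho> x \<noteq> 0)"

definition smooth_bounded_domain :: "pt set \<Rightarrow> bool" where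
  "smooth_bounded_domain \<Omega> \<longleftrightarrow> open \<Omega> \<and> connected \<Omega> \<and> bounded \<Omega> \<and> \<Omega> \<noteq> {} \<and>
     (\<exists>\<rho>. defining_function \<Omega> \<rho>)"

definition outward_normal :: "pt set \<Rightarrow> pt \<Rightarrow> pt" where
  "outward_normal \<Omega> x =
     (let \<rho> = (SOME \<rho>. defining_function \<Omega> \<rho>) in (1 / norm (grad \<rho> x)) *\<^sub>R grad \<rho> x)"

text \<open>W^{1,infinity}(Omega) for a bounded smooth domain: bounded Lipschitz functions on Omega.\<close>

definition W1inf :: "pt set \<Rightarrow> (pt \<Rightarrow> real) \<Rightarrow> bool" where
  "W1inf \<Omega> \<phi> \<longleftrightarrow> bounded (\<phi> ` \<Omega>) \<and>
     (\<exists>L. \<forall>x\<in>\<Omega>. \<forall>y\<in>\<Omega>. \<bar>\<phi> x - \<phi> y\<bar> \<le> L * dist x y)"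

definition ext_cont :: "pt set \<Rightarrow> (pt \<Rightarrow> real \<Rightarrow> real) \<Rightarrow> bool" where
  "ext_cont \<Omega> F \<longleftrightarrow> (\<exists>G. continuous_on (closure \<Omega> \<times> {0<..}) G \<and>
     (\<forall>x\<in>\<Omega>. \<forall>t>0. G (x, t) = F x t))"

definition C21 :: "pt set \<Rightarrow> (pt \<Rightarrow> real \<Rightarrow> real) \<Rightarrow> bool" where
  "C21 \<Omega> f \<longleftrightarrow>
     continuous_on (closure \<Omega> \<times> {0..}) (\<lambda>(x, t). f x t) \<and>
     (\<forall>x\<in>\<Omega>. \<forall>t>0.
        (\<forall>i. pdiff i (\<lambda>y. f y t) x) \<and>
        (\<forall>i j. pdiff j (pd i (\<lambda>y. f y t)) x) \<and>
        (\<lambda>s. f x s) differentiable (at t)) \<and>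
     (\<forall>i. ext_cont \<Omega> (\<lambda>x t. pd i (\<lambda>y. f y t) x)) \<and>
     (\<forall>i j. ext_cont \<Omega> (\<lambda>x t. pd j (pd i (\<lambda>y. f y t)) x)) \<and>
     ext_cont \<Omega> (dt f)"

definition C10 :: "pt set \<Rightarrow> (pt \<Rightarrow> real \<Rightarrow> real) \<Rightarrow> bool" where
  "C10 \<Omega> P \<longleftrightarrow>
     continuous_on (\<Omega> \<times> {0<..}) (\<lambda>(x, t). P x t) \<and>
     (\<forall>x\<in>\<Omega>. \<forall>t>0. \<forall>i. pdiff i (\<lambda>y. P y t) x) \<and>
     (\<forall>i. continuous_on (\<Omega> \<times> {0<..}) (\<lambda>(x, t). pd i (\<lambda>y. P y t) x))"

definition classical_solution ::
  "pt set \<Rightarrow> (pt \<Rightarrow> real) \<Rightarrow> real \<Rightarrow> real \<Rightarrow> real \<Rightarrow> (pt \<Rightarrow> real) \<Rightarrow>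
   (pt \<Rightarrow> real \<Rightarrow> real) \<Rightarrow> (pt \<Rightarrow> real \<Rightarrow> real) \<Rightarrow> (pt \<Rightarrow> real \<Rightarrow> pt) \<Rightarrow> (pt \<Rightarrow> real \<Rightarrow> real) \<Rightarrow> bool"
  where
  "classical_solution \<Omega> \<phi> chi r \<mu> n0 n w u P \<longleftrightarrow>
     C21 \<Omega> n \<and> C21 \<Omega> w \<and> (\<forall>i. C21 \<Omega> (ucomp u i)) \<and> C10 \<Omega> P \<and>
     (\<forall>x\<in>closure \<Omega>. n x 0 = n0 x) \<and>
     (\<forall>x\<in>\<Omega>. \<forall>t>0.
        dt n x t + u x t \<bullet> grad (\<lambda>y. n y t) x
          = lap (\<lambda>y. n y t) x + chi * divg (\<lambda>y. n y t *\<^sub>R grad (\<lambda>z. w z t) y) x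
            + n x t * (r - \<mu> * n x t)) \<and>
     (\<forall>x\<in>\<Omega>. \<forall>t>0.
        dt w x t + u x t \<bullet> grad (\<lambda>y. w y t) x
          = lap (\<lambda>y. w y t) x - (norm (grad (\<lambda>y. w y t) x))\<^sup>2 + n x t) \<and>
     (\<forall>x\<in>\<Omega>. \<forall>t>0. \<phi> differentiable (at x) \<longrightarrow>
        vdt u x t + conv u u x t
          = vlap u x t + grad (\<lambda>y. P y t) x + n x t *\<^sub>R grad \<phi> x) \<and>
     (\<forall>x\<in>\<Omega>. \<forall>t>0. divg (\<lambda>y. u y t) x = 0) \<and>
     (\<forall>x\<in>frontier \<Omega>. \<forall>t>0.
        ((\<lambda>y. grad (\<lambda>z. n z t) y \<bullet> outward_normal \<Omega> x) \<longlongrightarrow> 0) (at x within \<Omega>) \<and>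
        ((\<lambda>y. grad (\<lambda>z. w z t) y \<bullet> outward_normal \<Omega> x) \<longlongrightarrow> 0) (at x within \<Omega>) \<and>
        u x t = 0)"

end

theory Submission
  imports Defs
begin

text \<open>Integrating the equations for \<open>n\<close> and \<open>w\<close> over \<open>\<Omega>\<close>, every divergence term drops
  out: the diffusive and chemotactic fluxes have zero normal component, and
  \<open>u \<bullet> \<nabla>n = \<nabla> \<bullet> (n u)\<close> because \<open>\<nabla> \<bullet> u = 0\<close> and \<open>u = 0\<close> on \<open>\<partial>\<Omega>\<close>. Hence
  \<open>y(t) = \<integral>n\<close> satisfies \<open>y' = r y - \<mu> \<integral>n\<^sup>2 \<le> r y - \<mu> y\<^sup>2 / |\<Omega>|\<close> by Cauchy-Schwarz; ODE
  comparison gives the bound on the limit superior and, for \<open>r \<le> 0\<close>, the decay by comparison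
  with the Riccati equation, while integrating \<open>y'\<close> in time gives the bound on \<open>\<integral>\<integral>n\<^sup>2\<close>.
  Likewise \<open>(\<integral>w)' = \<integral>n - \<integral>|\<nabla>w|\<^sup>2\<close>, and \<open>w \<ge> 0\<close> bounds the dissipation.

  The divergence theorem on \<open>\<Omega> = {\<rho> < 0}\<close> is obtained without boundary integrals: testing
  with \<open>cutoff \<epsilon> = smooth_step (-\<rho>/\<epsilon> - 1)\<close> turns \<open>\<integral> cutoff \<epsilon> \<cdot> \<nabla> \<bullet> F\<close> into an integral of
  \<open>F \<bullet> \<nabla>\<rho>\<close> over a boundary layer of width \<open>\<epsilon>\<close>, which vanishes as \<open>\<epsilon> \<rightarrow> 0\<close>.\<close>

section \<open>Partial derivatives\<close>

lemma has_pd_imp_pd: "has_pd i g x d \<Longrightarrow> pd i g x = d"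
  unfolding has_pd_def pd_def by (rule DERIV_imp_deriv)

lemma pdiff_imp_has_pd: "pdiff i g x \<Longrightarrow> has_pd i g x (pd i g x)"
  unfolding pdiff_def using has_pd_imp_pd by metis

lemma has_pd_diff: "has_pd i f x a \<Longrightarrow> has_pd i g x b \<Longrightarrow> has_pd i (\<lambda>y. f y - g y) x (a - b)"
  unfolding has_pd_def by (rule derivative_intros)

lemma has_pd_mult:
  "has_pd i f x a \<Longrightarrow> has_pd i g x b \<Longrightarrow> has_pd i (\<lambda>y. f y * g y) x (a * g x + f x * b)"
  unfolding has_pd_def by (auto intro!: derivative_eq_intros)

lemma has_pd_cmult: "has_pd i f x a \<Longrightarrow> has_pd i (\<lambda>y. c * f y) x (c * a)"
  unfolding has_pd_def by (auto intro!: derivative_eq_intros)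

lemma has_pd_const: "has_pd i (\<lambda>y. c) x 0"
  unfolding has_pd_def by (rule derivative_intros)

lemma has_pd_chain:
  assumes "has_pd i f x a" and "(\<phi> has_real_derivative d) (at (f x))"
  shows "has_pd i (\<lambda>y. \<phi> (f y)) x (d * a)"
  using DERIV_chain[of \<phi> d "\<lambda>h. f (x + h *\<^sub>R axis i 1)" 0 a] assms
  unfolding has_pd_def by (simp add: o_def)

lemma has_pd_transform_open:
  assumes "has_pd i g x d" and "open S" and "x \<in> S" and "\<And>y. y \<in> S \<Longrightarrow> f y = g y"
  shows "has_pd i f x d"
proof -
  have "open ((\<lambda>h::real. x + h *\<^sub>R axis i 1) -` S)"
    by (rule continuous_open_vimage[OF \<open>open S\<close>]) (auto intro!: continuous_intros)
  with assms show ?thesis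
    unfolding has_pd_def by (auto intro: has_field_derivative_transform_within_open)
qed

lemma has_pd_imp_line_derivative:
  assumes "has_pd i g (x + s *\<^sub>R axis i 1) d"
  shows "((\<lambda>h. g (x + h *\<^sub>R axis i 1)) has_real_derivative d) (at s)"
proof -
  have "((\<lambda>h. g (x + (h + s) *\<^sub>R axis i 1)) has_real_derivative d) (at 0)"
    using assms unfolding has_pd_def by (simp add: algebra_simps scaleR_add_left)
  then show ?thesis using DERIV_shift[of "\<lambda>h. g (x + h *\<^sub>R axis i 1)" d 0 s] by simp
qed

lemma pd_difference_quotient_bound:
  assumes "\<And>y. has_pd i g y (g' y)" and "\<And>y. \<bar>g' y\<bar> \<le> B"
  shows "\<bar>g (x + h *\<^sub>R axis i 1) - g x\<bar> \<le> B * \<bar>h\<bar>"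
proof -
  have "norm ((\<lambda>h. g (x + h *\<^sub>R axis i 1)) h - (\<lambda>h. g (x + h *\<^sub>R axis i 1)) 0) \<le> B * norm (h - 0)"
  proof (rule field_differentiable_bound[where S=UNIV and f'="\<lambda>s. g' (x + s *\<^sub>R axis i 1)"])
    show "((\<lambda>h. g (x + h *\<^sub>R axis i 1)) has_field_derivative g' (x + s *\<^sub>R axis i 1)) (at s within UNIV)"
      for s using has_pd_imp_line_derivative assms(1) by simp
  qed (use assms(2) in auto)
  then show ?thesis by simp
qed

lemma has_pd_difference_quotient_tendsto:
  assumes "has_pd i g x d" and "h \<longlonglongrightarrow> 0" and "\<And>k. h k \<noteq> 0"
  shows "(\<lambda>k. (g (x + h k *\<^sub>R axis i 1) - g x) / h k) \<longlonglongrightarrow> d"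
proof -
  have "((\<lambda>s. (g (x + s *\<^sub>R axis i 1) - g x) / s) \<longlongrightarrow> d) (at 0)"
    using assms(1) unfolding has_pd_def DERIV_def by simp
  then show ?thesis
    using assms(2,3) unfolding tendsto_at_iff_sequentially comp_def by simp
qed

section \<open>Integrals over the plane\<close>

lemma continuous_bounded_integrable:
  fixes f :: "'a::euclidean_space \<Rightarrow> real"
  assumes S: "S \<in> lmeasurable" and "continuous_on S f" and "\<And>x. x \<in> S \<Longrightarrow> \<bar>f x\<bar> \<le> B"
  shows "f integrable_on S"
proof -
  have "f \<in> borel_measurable (lebesgue_on S)"
    using continuous_imp_measurable_on_sets_lebesgue assms by blast
  then have "f absolutely_integrable_on S"
    by (rule measurable_bounded_by_integrable_imp_absolutely_integrable[of _ _ "\<lambda>_. B"])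
       (use assms integrable_on_const in auto)
  then show ?thesis using absolutely_integrable_on_def by blast
qed

lemma continuous_on_compact_abs_bound:
  fixes f :: "'a::metric_space \<Rightarrow> real"
  assumes "compact S" and "continuous_on S f"
  obtains B where "\<And>x. x \<in> S \<Longrightarrow> \<bar>f x\<bar> \<le> B"
proof -
  have "bounded (f ` S)" using assms compact_continuous_image compact_imp_bounded by blast
  then show ?thesis using that unfolding bounded_iff by force
qed

lemma has_integral_translate_box_support:
  fixes g :: "pt \<Rightarrow> real"
  assumes "(g has_integral I) (cbox (-a) a)" and "\<And>x. x \<notin> cbox (-a) a \<Longrightarrow> g x = 0"
  shows "((\<lambda>x. g (x + c)) has_integral I) UNIV"
proof (rule has_integral_on_superset[OF has_integral_shift_cbox[OF assms(1), of c]])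
  fix x assume "x \<notin> cbox (- a - c) (a - c)"
  then obtain j where "\<not> ((- a - c) $ j \<le> x $ j \<and> x $ j \<le> (a - c) $ j)"
    unfolding mem_box_cart by blast
  then have "\<not> ((- a) $ j \<le> (x + c) $ j \<and> (x + c) $ j \<le> a $ j)" by auto
  then have "x + c \<notin> cbox (-a) a" unfolding mem_box_cart by blast
  then show "g (x + c) = 0" using assms(2) by blast
qed auto

lemma has_integral_compact_support:
  fixes g :: "pt \<Rightarrow> real"
  assumes cont: "continuous_on UNIV g" and K: "compact K" and supp: "\<And>x. x \<notin> K \<Longrightarrow> g x = 0"
  obtains I where "(g has_integral I) UNIV" and "\<And>c. ((\<lambda>x. g (x + c)) has_integral I) UNIV"
proof -
  obtain R where R: "\<And>x. x \<in> K \<Longrightarrow> norm x \<le> R"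
    using compact_imp_bounded[OF K] unfolding bounded_iff by blast
  define a where "a = R *\<^sub>R (1::pt)"
  have outside_box: "g x = 0" if "x \<notin> cbox (-a) a" for x
  proof -
    have "x \<in> cbox (-a) a" if "norm x \<le> R"
      unfolding mem_box_cart a_def
    proof
      fix j
      have "\<bar>x $ j\<bar> \<le> R" using component_le_norm_cart[of x j] that by linarith
      then show "(- (R *\<^sub>R 1)) $ j \<le> x $ j \<and> x $ j \<le> (R *\<^sub>R (1::pt)) $ j"
        by (simp add: abs_le_iff)
    qed
    then show ?thesis using supp R that by blast
  qed
  obtain Bg where "\<And>x. x \<in> cbox (-a) a \<Longrightarrow> \<bar>g x\<bar> \<le> Bg"
    using continuous_on_compact_abs_bound[OF compact_cbox continuous_on_subset[OF cont]] by blast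
  then have "g integrable_on cbox (-a) a"
    by (intro continuous_bounded_integrable continuous_on_subset[OF cont]) auto
  then obtain I where I: "(g has_integral I) (cbox (-a) a)" by blast
  show ?thesis
  proof (rule that)
    show "(g has_integral I) UNIV"
      by (rule has_integral_on_superset[OF I]) (use outside_box in auto)
    show "((\<lambda>x. g (x + c)) has_integral I) UNIV" for c
      by (rule has_integral_translate_box_support[OF I outside_box])
  qed
qed

text \<open>The difference quotients have integral zero by translation invariance and converge
  dominatedly to the derivative.\<close>

lemma integral_pd_compact_support:
  fixes g g' :: "pt \<Rightarrow> real"
  assumes cont: "continuous_on UNIV g" and K: "compact K" and supp: "\<And>x. x \<notin> K \<Longrightarrow> g x = 0"
    and pd: "\<And>x. has_pd i g x (g' x)" and bound: "\<And>x. \<bar>g' x\<bar> \<le> B"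
  shows "g' integrable_on UNIV" and "integral UNIV g' = 0"
proof -
  define e where "e = (axis i 1 :: pt)"
  obtain I where I: "(g has_integral I) UNIV" "\<And>c. ((\<lambda>x. g (x + c)) has_integral I) UNIV"
    using has_integral_compact_support[OF cont K supp] by blast
  obtain R where R: "\<And>x. x \<in> K \<Longrightarrow> norm x \<le> R"
    using compact_imp_bounded[OF K] unfolding bounded_iff by blast
  define h :: "nat \<Rightarrow> real" where "h k = 1 / real (Suc k)" for k
  have h: "h k > 0" "h k \<le> 1" for k by (auto simp: h_def)
  have "h \<longlonglongrightarrow> 0" unfolding h_def using LIMSEQ_Suc[OF lim_1_over_n] by simp
  define q where "q k x = (g (x + h k *\<^sub>R e) - g x) / h k" for k x
  have q_integral: "(q k has_integral 0) UNIV" for k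
    using has_integral_mult_right[OF has_integral_diff[OF I(2) I(1)], of "1 / h k"]
    unfolding q_def by simp
  define dom where "dom x = (if x \<in> cball 0 (R + 1) then B else 0)" for x :: pt
  have "dom integrable_on UNIV"
    unfolding dom_def integrable_restrict_UNIV by (rule integrable_on_const) simp
  moreover have "norm (q k x) \<le> dom x" for k x
  proof (cases "x \<in> cball 0 (R + 1)")
    case True
    then show ?thesis
      using pd_difference_quotient_bound[OF pd bound, of x "h k"] h[of k]
      by (simp add: q_def dom_def e_def divide_le_eq abs_mult)
  next
    case False
    then have "norm x > R + 1" by simp
    moreover have "norm (x + h k *\<^sub>R e) \<ge> norm x - h k"
      using norm_diff_ineq[of x "h k *\<^sub>R e"] h[of k] by (simp add: e_def)
    ultimately have "g (x + h k *\<^sub>R e) = 0" "g x = 0"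
      using supp R h[of k] by force+
    then show ?thesis using False by (simp add: q_def dom_def)
  qed
  moreover have "(\<lambda>k. q k x) \<longlonglongrightarrow> g' x" for x
    unfolding q_def e_def
    by (rule has_pd_difference_quotient_tendsto[OF pd \<open>h \<longlonglongrightarrow> 0\<close>])
       (use h(1) in \<open>simp add: less_imp_neq[symmetric]\<close>)
  ultimately have "g' integrable_on UNIV \<and> (\<lambda>k. integral UNIV (q k)) \<longlonglongrightarrow> integral UNIV g'"
    using dominated_convergence[of q UNIV dom g'] q_integral by blast
  moreover have "integral UNIV (q k) = 0" for k using q_integral by blast
  ultimately show "g' integrable_on UNIV" and "integral UNIV g' = 0"
    using LIMSEQ_unique[of "\<lambda>k. 0"] by auto
qed

section \<open>A continuously differentiable step function\<close>

definition pos_sq :: "real \<Rightarrow> real" where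
  "pos_sq s = (max 0 s)\<^sup>2"

lemma pos_sq_has_derivative: "(pos_sq has_real_derivative 2 * max 0 s) (at s)"
proof -
  consider "s < 0" | "s = 0" | "s > 0" by linarith
  then show ?thesis
  proof cases
    case 1
    have "((\<lambda>x. 0::real) has_real_derivative 2 * max 0 s) (at s)" using 1 by simp
    then show ?thesis
      by (rule has_field_derivative_transform_within_open[where S="{..<0}"])
         (use 1 in \<open>auto simp: pos_sq_def\<close>)
  next
    case 3
    have "((\<lambda>x. x\<^sup>2) has_real_derivative 2 * s) (at s)" by (auto intro!: derivative_eq_intros)
    then have "((\<lambda>x. x\<^sup>2) has_real_derivative 2 * max 0 s) (at s)" using 3 by simp
    then show ?thesis
      by (rule has_field_derivative_transform_within_open[where S="{0<..}"])
         (use 3 in \<open>auto simp: pos_sq_def\<close>)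
  next
    case 2
    have "((\<lambda>h. pos_sq h / h) \<longlongrightarrow> 0) (at 0)"
    proof (rule Lim_null_comparison)
      have "norm (pos_sq h / h) \<le> \<bar>h\<bar>" for h
        by (cases "h > 0") (auto simp: pos_sq_def power2_eq_square)
      then show "\<forall>\<^sub>F h in at 0. norm (pos_sq h / h) \<le> \<bar>h\<bar>"
        by (intro always_eventually allI)
      show "((\<lambda>h. \<bar>h\<bar>) \<longlongrightarrow> 0) (at (0::real))"
        using tendsto_rabs[OF tendsto_ident_at[of 0 UNIV]] by simp
    qed
    then show ?thesis using 2 unfolding DERIV_def by (simp add: pos_sq_def)
  qed
qed

text \<open>A second difference of \<open>pos_sq\<close>, hence \<open>C\<^sup>1\<close> with a tent-shaped derivative.\<close>

definition smooth_step :: "real \<Rightarrow> real" where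
  "smooth_step s = 2 * (pos_sq s - 2 * pos_sq (s - 1/2) + pos_sq (s - 1))"

definition smooth_step_deriv :: "real \<Rightarrow> real" where
  "smooth_step_deriv s = 4 * (max 0 s - 2 * max 0 (s - 1/2) + max 0 (s - 1))"

lemma smooth_step_has_derivative: "(smooth_step has_real_derivative smooth_step_deriv s) (at s)"
proof -
  have shifted: "((\<lambda>x. pos_sq (x - c)) has_real_derivative 2 * max 0 (s - c)) (at s)" for c
  proof -
    have inner: "((\<lambda>x. x - c) has_real_derivative 1) (at s)" by (auto intro!: derivative_eq_intros)
    have outer: "(pos_sq has_real_derivative 2 * max 0 (s - c)) (at ((\<lambda>x. x - c) s))"
      by (simp add: pos_sq_has_derivative)
    show ?thesis using DERIV_chain[OF outer inner] by (simp add: o_def)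
  qed
  have "((\<lambda>x. 2 * (pos_sq (x - 0) - 2 * pos_sq (x - 1/2) + pos_sq (x - 1))) has_real_derivative
      2 * (2 * max 0 (s - 0) - 2 * (2 * max 0 (s - 1/2)) + 2 * max 0 (s - 1))) (at s)"
    by (intro DERIV_cmult DERIV_add DERIV_diff shifted)
  then show ?thesis unfolding smooth_step_def smooth_step_deriv_def by (simp add: algebra_simps)
qed

lemma continuous_on_smooth_step: "continuous_on S smooth_step"
  by (rule continuous_at_imp_continuous_on) (use DERIV_isCont[OF smooth_step_has_derivative] in blast)

lemma smooth_step_eq_0: "s \<le> 0 \<Longrightarrow> smooth_step s = 0"
  by (simp add: smooth_step_def pos_sq_def)

lemma smooth_step_eq_1: "s \<ge> 1 \<Longrightarrow> smooth_step s = 1"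
  by (simp add: smooth_step_def pos_sq_def power2_eq_square algebra_simps)

lemma abs_smooth_step_le_1: "\<bar>smooth_step s\<bar> \<le> 1"
proof -
  consider "s \<le> 0" | "0 < s \<and> s \<le> 1/2" | "1/2 < s \<and> s < 1" | "1 \<le> s" by linarith
  then show ?thesis
  proof cases
    case 2
    then have "smooth_step s = 2 * s\<^sup>2" by (simp add: smooth_step_def pos_sq_def)
    moreover have "s * s \<le> (1/2) * (1/2)" using 2 by (intro mult_mono) auto
    moreover have "0 \<le> s * s" by simp
    ultimately show ?thesis unfolding power2_eq_square abs_le_iff by linarith
  next
    case 3
    then have "smooth_step s = 1 - 2 * (1 - s)\<^sup>2"
      by (simp add: smooth_step_def pos_sq_def power2_eq_square algebra_simps)
    moreover have "(1 - s) * (1 - s) \<le> (1/2) * (1/2)" using 3 by (intro mult_mono) auto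
    moreover have "0 \<le> (1 - s) * (1 - s)" by simp
    ultimately show ?thesis unfolding power2_eq_square abs_le_iff by linarith
  qed (auto simp: smooth_step_eq_0 smooth_step_eq_1)
qed

lemma smooth_step_deriv_nonneg: "0 \<le> smooth_step_deriv s"
  unfolding smooth_step_deriv_def
  by (cases "s \<le> 0"; cases "s \<le> 1/2"; cases "s \<le> 1") (auto simp: max_def)

lemma smooth_step_deriv_le_2: "smooth_step_deriv s \<le> 2"
  unfolding smooth_step_deriv_def
  by (cases "s \<le> 0"; cases "s \<le> 1/2"; cases "s \<le> 1") (auto simp: max_def)

lemma smooth_step_deriv_eq_0: "s \<le> 0 \<or> s \<ge> 1 \<Longrightarrow> smooth_step_deriv s = 0"
  unfolding smooth_step_deriv_def
  by (cases "s \<le> 0"; cases "s \<le> 1/2"; cases "s \<le> 1") (auto simp: max_def)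

section \<open>Domains with a global defining function\<close>

definition regular_field :: "pt set \<Rightarrow> (pt \<Rightarrow> pt) \<Rightarrow> bool" where
  "regular_field S F \<longleftrightarrow>
     continuous_on S F \<and> (\<exists>B. \<forall>x\<in>S. norm (F x) \<le> B) \<and>
     (\<forall>i. \<forall>x\<in>S. has_pd i (\<lambda>y. F y $ i) x (pd i (\<lambda>y. F y $ i) x)) \<and>
     (\<forall>i. continuous_on S (pd i (\<lambda>y. F y $ i))) \<and>
     (\<exists>B. \<forall>i. \<forall>x\<in>S. \<bar>pd i (\<lambda>y. F y $ i) x\<bar> \<le> B)"

lemma regular_field_bounds:
  assumes "regular_field S F"
  obtains B B' where "0 \<le> B" "\<And>x. x \<in> S \<Longrightarrow> norm (F x) \<le> B"
    and "0 \<le> B'" "\<And>i x. x \<in> S \<Longrightarrow> \<bar>pd i (\<lambda>y. F y $ i) x\<bar> \<le> B'"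
proof -
  obtain B B' where "\<And>x. x \<in> S \<Longrightarrow> norm (F x) \<le> B"
    and "\<And>i x. x \<in> S \<Longrightarrow> \<bar>pd i (\<lambda>y. F y $ i) x\<bar> \<le> B'"
    using assms unfolding regular_field_def by blast
  then show ?thesis
    by (intro that[of "max B 0" "max B' 0"]) (auto simp: le_max_iff_disj)
qed

lemma continuous_on_divg: "regular_field S F \<Longrightarrow> continuous_on S (divg F)"
  unfolding regular_field_def divg_def[abs_def] by (intro continuous_on_sum) auto

lemma divg_bound:
  assumes "regular_field S F"
  obtains B where "\<And>x. x \<in> S \<Longrightarrow> \<bar>divg F x\<bar> \<le> B"
proof -
  obtain B where B: "\<And>i x. x \<in> S \<Longrightarrow> \<bar>pd i (\<lambda>y. F y $ i) x\<bar> \<le> B"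
    using assms unfolding regular_field_def by blast
  have "\<bar>divg F x\<bar> \<le> (\<Sum>i\<in>(UNIV::2 set). B)" if "x \<in> S" for x
    unfolding divg_def using B[OF that] by (intro order.trans[OF sum_abs] sum_mono) auto
  then show ?thesis using that by blast
qed

text \<open>\<open>D ks\<close> is the iterated partial derivative of \<open>\<rho>\<close> in the directions listed in \<open>ks\<close>.\<close>

locale smooth_domain =
  fixes \<Omega> :: "pt set" and \<rho> :: "pt \<Rightarrow> real" and D :: "2 list \<Rightarrow> pt \<Rightarrow> real"
  assumes open_domain: "open \<Omega>" and bounded_domain: "bounded \<Omega>"
    and domain_eq: "\<Omega> = {x. \<rho> x < 0}"
    and D_Nil: "D [] = \<rho>" and continuous_D: "\<And>ks. continuous_on UNIV (D ks)"
    and has_pd_D: "\<And>ks i x. has_pd i (D ks) x (D (i # ks) x)"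
    and grad_nonzero: "\<And>x. \<rho> x = 0 \<Longrightarrow> grad \<rho> x \<noteq> 0"
begin

lemma continuous_rho: "continuous_on S \<rho>"
  using continuous_D[of "[]"] D_Nil continuous_on_subset by auto

lemma closure_domain_subset: "closure \<Omega> \<subseteq> {x. \<rho> x \<le> 0}"
  by (rule closure_minimal) (use domain_eq continuous_rho in \<open>auto intro!: closed_Collect_le continuous_intros\<close>)

lemma frontier_imp_rho_eq_0: "x \<in> frontier \<Omega> \<Longrightarrow> \<rho> x = 0"
  using closure_domain_subset domain_eq open_domain by (force simp: frontier_def interior_open)

lemma lmeasurable_domain: "\<Omega> \<in> lmeasurable"
  using lmeasurable_open bounded_domain open_domain by blast

lemma closure_abs_bound:
  fixes f :: "pt \<Rightarrow> real"
  assumes "continuous_on (closure \<Omega>) f"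
  obtains B where "0 \<le> B" "\<And>x. x \<in> closure \<Omega> \<Longrightarrow> \<bar>f x\<bar> \<le> B"
proof -
  obtain B where "\<And>x. x \<in> closure \<Omega> \<Longrightarrow> \<bar>f x\<bar> \<le> B"
    using continuous_on_compact_abs_bound[OF _ assms] bounded_domain by (metis compact_closure)
  then show ?thesis by (intro that[of "max B 0"]) (auto simp: le_max_iff_disj)
qed

lemma integrable_on_domain:
  fixes f :: "pt \<Rightarrow> real"
  assumes "continuous_on \<Omega> f" and "\<And>x. x \<in> \<Omega> \<Longrightarrow> \<bar>f x\<bar> \<le> B"
  shows "f integrable_on \<Omega>"
  using continuous_bounded_integrable[OF lmeasurable_domain] assms by blast

lemma integrable_on_domain_closure:
  fixes f :: "pt \<Rightarrow> real"
  assumes "continuous_on (closure \<Omega>) f"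
  shows "f integrable_on \<Omega>"
proof -
  obtain B where "\<And>x. x \<in> closure \<Omega> \<Longrightarrow> \<bar>f x\<bar> \<le> B" using closure_abs_bound[OF assms] by blast
  then show ?thesis
    using integrable_on_domain continuous_on_subset[OF assms closure_subset] closure_subset by blast
qed

lemma integrable_divg:
  assumes "regular_field \<Omega> F"
  shows "divg F integrable_on \<Omega>"
proof -
  obtain B where "\<And>x. x \<in> \<Omega> \<Longrightarrow> \<bar>divg F x\<bar> \<le> B" using divg_bound[OF assms] by blast
  then show ?thesis using integrable_on_domain[OF continuous_on_divg[OF assms]] by blast
qed

lemma grad_rho_component: "grad \<rho> x $ i = D [i] x"
  using has_pd_imp_pd[OF has_pd_D[where ks="[]"]] D_Nil by (simp add: grad_def)

lemma has_pd_rho: "has_pd i \<rho> x (grad \<rho> x $ i)"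
  using has_pd_D[where ks="[]"] D_Nil by (simp add: grad_rho_component)

lemma continuous_grad_rho: "continuous_on S (grad \<rho>)"
proof -
  have "grad \<rho> = (\<lambda>x. \<chi> i. D [i] x)"
    by (simp add: fun_eq_iff vec_eq_iff grad_rho_component)
  then show ?thesis
    by (simp add: continuous_on_vec_lambda continuous_on_subset[OF continuous_D])
qed

lemma regular_field_grad_rho: "regular_field \<Omega> (grad \<rho>)"
proof -
  have pd_eq: "pd i (\<lambda>y. grad \<rho> y $ i) = D [i, i]" for i
    using has_pd_imp_pd[OF has_pd_D] by (simp add: grad_rho_component fun_eq_iff)
  have cont2: "continuous_on (closure \<Omega>) (D [i, i])" for i
    using continuous_D continuous_on_subset by blast
  obtain B1 where B1: "\<And>x. x \<in> closure \<Omega> \<Longrightarrow> \<bar>norm (grad \<rho> x)\<bar> \<le> B1"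
    using closure_abs_bound[OF continuous_on_norm[OF continuous_grad_rho]] by blast
  have "continuous_on (closure \<Omega>) (\<lambda>x. \<Sum>j\<in>UNIV. \<bar>D [j, j] x\<bar>)"
    by (intro continuous_intros cont2)
  then obtain B2 where B2: "\<And>x. x \<in> closure \<Omega> \<Longrightarrow> \<bar>\<Sum>j\<in>UNIV. \<bar>D [j, j] x\<bar>\<bar> \<le> B2"
    using closure_abs_bound by blast
  show ?thesis
    unfolding regular_field_def
  proof (intro conjI exI allI ballI)
    show "continuous_on \<Omega> (grad \<rho>)" by (rule continuous_grad_rho)
    show "norm (grad \<rho> x) \<le> B1" if "x \<in> \<Omega>" for x
      using B1[of x] that closure_subset by auto
    show "has_pd i (\<lambda>y. grad \<rho> y $ i) x (pd i (\<lambda>y. grad \<rho> y $ i) x)" for i x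
      using has_pd_D[where ks="[i]"] has_pd_imp_pd[OF has_pd_D[where ks="[i]"]]
      by (simp add: grad_rho_component)
    show "continuous_on \<Omega> (pd i (\<lambda>y. grad \<rho> y $ i))" for i
      unfolding pd_eq using cont2 continuous_on_subset closure_subset by blast
    show "\<bar>pd i (\<lambda>y. grad \<rho> y $ i) x\<bar> \<le> B2" if "x \<in> \<Omega>" for i x
    proof -
      have "\<bar>D [i, i] x\<bar> \<le> (\<Sum>j\<in>UNIV. \<bar>D [j, j] x\<bar>)" by (rule member_le_sum) auto
      moreover have "x \<in> closure \<Omega>" using that closure_subset by blast
      ultimately show ?thesis using B2[of x] unfolding pd_eq by auto
    qed
  qed
qed

end

context smooth_domain
begin

definition cutoff :: "real \<Rightarrow> pt \<Rightarrow> real" where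
  "cutoff e x = smooth_step (- \<rho> x / e - 1)"

definition layer :: "real \<Rightarrow> pt \<Rightarrow> real" where
  "layer e x = smooth_step_deriv (- \<rho> x / e - 1) / e"

lemma continuous_cutoff_argument: "continuous_on S (\<lambda>x. - \<rho> x / e - 1)"
proof -
  have "(\<lambda>x. - \<rho> x / e - 1) = (\<lambda>x. (- 1 / e) * \<rho> x - 1)" by auto
  show ?thesis unfolding \<open>_ = _\<close> by (intro continuous_intros continuous_rho)
qed

lemma continuous_cutoff: "continuous_on S (cutoff e)"
  unfolding cutoff_def[abs_def]
  by (rule continuous_on_compose2[OF continuous_on_smooth_step continuous_cutoff_argument]) auto

lemma has_pd_cutoff:
  assumes "e > 0"
  shows "has_pd i (cutoff e) x (- layer e x * grad \<rho> x $ i)"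
proof -
  have "has_pd i (\<lambda>y. (- 1 / e) * \<rho> y) x ((- 1 / e) * grad \<rho> x $ i)"
    by (rule has_pd_cmult[OF has_pd_rho])
  from has_pd_diff[OF this has_pd_const[of i 1 x]]
  have "has_pd i (\<lambda>y. - \<rho> y / e - 1) x (- grad \<rho> x $ i / e)" by simp
  from has_pd_chain[OF this smooth_step_has_derivative] show ?thesis
    unfolding cutoff_def[abs_def] layer_def by simp
qed

lemma cutoff_eq_0: "e > 0 \<Longrightarrow> \<rho> x \<ge> - e \<Longrightarrow> cutoff e x = 0"
  unfolding cutoff_def by (rule smooth_step_eq_0) (simp add: field_simps)

lemma cutoff_eq_1: "e > 0 \<Longrightarrow> \<rho> x \<le> - 2 * e \<Longrightarrow> cutoff e x = 1"
  unfolding cutoff_def by (rule smooth_step_eq_1) (simp add: field_simps)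

lemma abs_cutoff_le_1: "\<bar>cutoff e x\<bar> \<le> 1"
  unfolding cutoff_def by (rule abs_smooth_step_le_1)

lemma layer_nonneg: "e > 0 \<Longrightarrow> 0 \<le> layer e x"
  unfolding layer_def using smooth_step_deriv_nonneg by simp

lemma layer_le: "e > 0 \<Longrightarrow> layer e x \<le> 2 / e"
  unfolding layer_def using smooth_step_deriv_le_2 by (simp add: divide_right_mono)

lemma layer_eq_0: "e > 0 \<Longrightarrow> \<rho> x \<le> - 2 * e \<Longrightarrow> layer e x = 0"
  unfolding layer_def by (simp add: smooth_step_deriv_eq_0 field_simps)

lemma continuous_layer: "continuous_on S (layer e)"
proof -
  have "continuous_on UNIV smooth_step_deriv"
    unfolding smooth_step_deriv_def by (intro continuous_intros)
  then have "continuous_on S (\<lambda>x. smooth_step_deriv (- \<rho> x / e - 1))"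
    by (rule continuous_on_compose2[OF _ continuous_cutoff_argument]) auto
  then show ?thesis
    unfolding layer_def[abs_def] divide_inverse by (intro continuous_intros)
qed

lemma compact_sublevel: "e > 0 \<Longrightarrow> compact {x. \<rho> x \<le> - e}"
proof -
  assume "e > 0"
  then have "{x. \<rho> x \<le> - e} \<subseteq> \<Omega>" using domain_eq by auto
  then have "bounded {x. \<rho> x \<le> - e}" using bounded_subset[OF bounded_domain] by blast
  moreover have "closed {x. \<rho> x \<le> - e}"
    by (intro closed_Collect_le continuous_intros continuous_rho)
  ultimately show ?thesis by (simp add: compact_eq_bounded_closed)
qed

text \<open>Near the complement of \<open>\<Omega>\<close> the cutoff vanishes identically, so its product with a
  function on \<open>\<Omega>\<close>, extended by zero, is as regular as that function.\<close>

lemma continuous_cutoff_zero_extension: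
  assumes "e > 0" and "continuous_on \<Omega> f"
  shows "continuous_on UNIV (\<lambda>x. if x \<in> \<Omega> then cutoff e x * f x else 0)"
proof -
  define U where "U = {x. - e < \<rho> x}"
  have "open U" unfolding U_def by (intro open_Collect_less continuous_intros continuous_rho)
  have "continuous_on \<Omega> (\<lambda>x. cutoff e x * f x)"
    by (intro continuous_intros continuous_cutoff assms(2))
  then have "continuous_on \<Omega> (\<lambda>x. if x \<in> \<Omega> then cutoff e x * f x else 0)"
    by (rule continuous_on_eq) simp
  moreover have "continuous_on U (\<lambda>x. if x \<in> \<Omega> then cutoff e x * f x else 0)"
    by (rule continuous_on_eq[of U "\<lambda>x. 0"]) (simp_all add: U_def cutoff_eq_0 assms(1))
  ultimately have "continuous_on (\<Omega> \<union> U) (\<lambda>x. if x \<in> \<Omega> then cutoff e x * f x else 0)"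
    by (rule continuous_on_open_Un[OF open_domain \<open>open U\<close>])
  moreover have "\<Omega> \<union> U = UNIV" using assms(1) unfolding U_def domain_eq by auto
  ultimately show ?thesis by simp
qed

lemma has_pd_cutoff_zero_extension:
  assumes e: "e > 0" and f: "\<And>x. x \<in> \<Omega> \<Longrightarrow> has_pd i f x (f' x)"
  shows "has_pd i (\<lambda>x. if x \<in> \<Omega> then cutoff e x * f x else 0) x
    (if x \<in> \<Omega> then cutoff e x * f' x - layer e x * grad \<rho> x $ i * f x else 0)"
proof (cases "x \<in> \<Omega>")
  case True
  have "has_pd i (\<lambda>y. cutoff e y * f y) x (cutoff e x * f' x - layer e x * grad \<rho> x $ i * f x)"
    using has_pd_mult[OF has_pd_cutoff[OF e] f[OF True]] by (simp add: algebra_simps)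
  then have "has_pd i (\<lambda>x. if x \<in> \<Omega> then cutoff e x * f x else 0) x
      (cutoff e x * f' x - layer e x * grad \<rho> x $ i * f x)"
    by (rule has_pd_transform_open[OF _ open_domain True]) auto
  then show ?thesis using True by simp
next
  case False
  define U where "U = {x. - e < \<rho> x}"
  have "open U" unfolding U_def by (intro open_Collect_less continuous_intros continuous_rho)
  moreover have "x \<in> U" using False e unfolding U_def domain_eq by auto
  ultimately have "has_pd i (\<lambda>x. if x \<in> \<Omega> then cutoff e x * f x else 0) x 0"
    by (rule has_pd_transform_open[OF has_pd_const]) (auto simp: U_def cutoff_eq_0 e)
  then show ?thesis using False by simp
qed

lemma integral_pd_cutoff_field:
  fixes i :: 2
  assumes F: "regular_field \<Omega> F" and e: "e > 0"
  defines "g \<equiv> \<lambda>x. cutoff e x * pd i (\<lambda>y. F y $ i) x - layer e x * grad \<rho> x $ i * F x $ i"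
  shows "g integrable_on \<Omega>" and "integral \<Omega> g = 0"
proof -
  have F_pd: "\<And>x. x \<in> \<Omega> \<Longrightarrow> has_pd i (\<lambda>y. F y $ i) x (pd i (\<lambda>y. F y $ i) x)"
    and F_cont: "continuous_on \<Omega> (\<lambda>x. F x $ i)"
    using F unfolding regular_field_def by (auto intro: continuous_intros)
  obtain BF BD where BF: "0 \<le> BF" "\<And>x. x \<in> \<Omega> \<Longrightarrow> norm (F x) \<le> BF"
    and BD: "0 \<le> BD" "\<And>j x. x \<in> \<Omega> \<Longrightarrow> \<bar>pd j (\<lambda>y. F y $ j) x\<bar> \<le> BD"
    using regular_field_bounds[OF F] by blast
  have "continuous_on (closure \<Omega>) (\<lambda>x. grad \<rho> x $ i)"
    by (intro continuous_intros continuous_grad_rho)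
  then obtain Bg where Bg: "0 \<le> Bg" "\<And>x. x \<in> closure \<Omega> \<Longrightarrow> \<bar>grad \<rho> x $ i\<bar> \<le> Bg"
    using closure_abs_bound by blast
  define g0 where "g0 x = (if x \<in> \<Omega> then g x else 0)" for x
  have g0_pd: "has_pd i (\<lambda>x. if x \<in> \<Omega> then cutoff e x * F x $ i else 0) x (g0 x)" for x
    unfolding g0_def g_def by (rule has_pd_cutoff_zero_extension[OF e F_pd])
  have g0_bound: "\<bar>g0 x\<bar> \<le> BD + 2 / e * Bg * BF" for x
  proof (cases "x \<in> \<Omega>")
    case True
    have "\<bar>cutoff e x * pd i (\<lambda>y. F y $ i) x\<bar> \<le> 1 * BD"
      unfolding abs_mult using abs_cutoff_le_1 BD True by (intro mult_mono) auto
    moreover have "\<bar>grad \<rho> x $ i\<bar> \<le> Bg" using Bg(2) True closure_subset by blast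
    moreover have "\<bar>F x $ i\<bar> \<le> BF"
      using BF(2)[OF True] component_le_norm_cart[of "F x" i] by linarith
    ultimately have "\<bar>cutoff e x * pd i (\<lambda>y. F y $ i) x\<bar> + \<bar>layer e x * grad \<rho> x $ i * F x $ i\<bar>
        \<le> BD + 2 / e * Bg * BF"
      unfolding abs_mult using layer_le[OF e] layer_nonneg[OF e] Bg(1) e
      by (intro add_mono mult_mono) auto
    then show ?thesis using True abs_triangle_ineq4 order_trans by (simp add: g0_def g_def)
  qed (use BD BF Bg e in \<open>simp add: g0_def\<close>)
  have "x \<notin> {x. \<rho> x \<le> - e} \<Longrightarrow> (if x \<in> \<Omega> then cutoff e x * F x $ i else 0) = 0" for x
    by (simp add: cutoff_eq_0 e)
  from integral_pd_compact_support[OF continuous_cutoff_zero_extension[OF e F_cont]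
      compact_sublevel[OF e] this g0_pd g0_bound]
  show "g integrable_on \<Omega>" and "integral \<Omega> g = 0"
    unfolding g0_def integrable_restrict_UNIV integral_restrict_UNIV by auto
qed

lemma integral_cutoff_divg:
  assumes F: "regular_field \<Omega> F" and e: "e > 0"
  shows "(\<lambda>x. cutoff e x * divg F x) integrable_on \<Omega>"
    and "(\<lambda>x. layer e x * (F x \<bullet> grad \<rho> x)) integrable_on \<Omega>"
    and "integral \<Omega> (\<lambda>x. cutoff e x * divg F x) = integral \<Omega> (\<lambda>x. layer e x * (F x \<bullet> grad \<rho> x))"
proof -
  define g where "g i x = cutoff e x * pd i (\<lambda>y. F y $ i) x - layer e x * grad \<rho> x $ i * F x $ i"
    for i x
  have sum_g: "(\<Sum>i\<in>UNIV. g i x) = cutoff e x * divg F x - layer e x * (F x \<bullet> grad \<rho> x)" for x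
    unfolding g_def divg_def inner_vec_def
    by (simp add: sum_subtractf sum_distrib_left algebra_simps)
  obtain BF where BF: "\<And>x. x \<in> \<Omega> \<Longrightarrow> norm (F x) \<le> BF"
    using F unfolding regular_field_def by blast
  obtain Bg where Bg: "\<And>x. x \<in> closure \<Omega> \<Longrightarrow> \<bar>norm (grad \<rho> x)\<bar> \<le> Bg"
    using closure_abs_bound[OF continuous_on_norm[OF continuous_grad_rho]] by blast
  obtain BB where BB: "\<And>x. x \<in> \<Omega> \<Longrightarrow> \<bar>divg F x\<bar> \<le> BB"
    using divg_bound[OF F] by blast
  have F_cont: "continuous_on \<Omega> F" using F unfolding regular_field_def by blast
  show layer_int: "(\<lambda>x. layer e x * (F x \<bullet> grad \<rho> x)) integrable_on \<Omega>"
  proof (rule integrable_on_domain)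
    show "continuous_on \<Omega> (\<lambda>x. layer e x * (F x \<bullet> grad \<rho> x))"
      by (intro continuous_intros continuous_layer F_cont continuous_grad_rho)
    fix x assume x: "x \<in> \<Omega>"
    have "\<bar>F x \<bullet> grad \<rho> x\<bar> \<le> norm (F x) * norm (grad \<rho> x)"
      by (rule Cauchy_Schwarz_ineq2)
    also have "\<dots> \<le> BF * Bg"
    proof (rule mult_mono)
      show "norm (grad \<rho> x) \<le> Bg" using Bg[of x] x closure_subset by auto
      show "0 \<le> BF" using order_trans[OF norm_ge_zero BF[OF x]] .
    qed (use BF[OF x] in simp_all)
    finally have "\<bar>F x \<bullet> grad \<rho> x\<bar> \<le> BF * Bg" .
    then show "\<bar>layer e x * (F x \<bullet> grad \<rho> x)\<bar> \<le> 2 / e * (BF * Bg)"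
      unfolding abs_mult using layer_le[OF e] layer_nonneg[OF e] e
      by (intro mult_mono) auto
  qed
  show cutoff_int: "(\<lambda>x. cutoff e x * divg F x) integrable_on \<Omega>"
  proof (rule integrable_on_domain)
    show "continuous_on \<Omega> (\<lambda>x. cutoff e x * divg F x)"
      by (intro continuous_intros continuous_cutoff continuous_on_divg[OF F])
    show "\<bar>cutoff e x * divg F x\<bar> \<le> 1 * BB" if "x \<in> \<Omega>" for x
      unfolding abs_mult using abs_cutoff_le_1 BB[OF that] by (intro mult_mono) auto
  qed
  have "integral \<Omega> (\<lambda>x. cutoff e x * divg F x) - integral \<Omega> (\<lambda>x. layer e x * (F x \<bullet> grad \<rho> x))
      = integral \<Omega> (\<lambda>x. \<Sum>i\<in>UNIV. g i x)"
    by (simp add: integral_diff[OF cutoff_int layer_int] sum_g)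
  also have "\<dots> = 0"
    using integral_pd_cutoff_field[OF F e] unfolding g_def by (simp add: integral_sum)
  finally show "integral \<Omega> (\<lambda>x. cutoff e x * divg F x) = integral \<Omega> (\<lambda>x. layer e x * (F x \<bullet> grad \<rho> x))"
    by simp
qed

end

context smooth_domain
begin

definition zero_normal_trace :: "(pt \<Rightarrow> pt) \<Rightarrow> bool" where
  "zero_normal_trace F \<longleftrightarrow> (\<forall>x\<in>frontier \<Omega>. ((\<lambda>y. F y \<bullet> grad \<rho> x) \<longlongrightarrow> 0) (at x within \<Omega>))"

lemma rho_tendsto_0_imp_frontier:
  assumes X: "\<And>k. X k \<in> \<Omega>" and "(\<lambda>k. \<rho> (X k)) \<longlonglongrightarrow> 0" and "X \<longlonglongrightarrow> l"
  shows "l \<in> frontier \<Omega>" and "\<rho> l = 0"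
proof -
  have "(\<lambda>k. \<rho> (X k)) \<longlonglongrightarrow> \<rho> l"
    using continuous_rho[of UNIV] assms(3)
    by (metis continuous_on_eq_continuous_at isCont_tendsto_compose open_UNIV UNIV_I)
  then show "\<rho> l = 0" using assms(2) LIMSEQ_unique by blast
  moreover have "l \<in> closure \<Omega>" using X assms(3) closure_sequential by blast
  ultimately show "l \<in> frontier \<Omega>"
    using domain_eq open_domain by (simp add: frontier_def interior_open)
qed

lemma normal_component_tendsto_0:
  assumes F: "\<And>x. x \<in> \<Omega> \<Longrightarrow> norm (F x) \<le> B"
    and bdry: "((\<lambda>y. F y \<bullet> grad \<rho> l) \<longlongrightarrow> 0) (at l within \<Omega>)"
    and X: "\<And>k. X k \<in> \<Omega>" "l \<notin> \<Omega>" and lim: "X \<longlonglongrightarrow> l"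
  shows "(\<lambda>k. F (X k) \<bullet> grad \<rho> (X k)) \<longlonglongrightarrow> 0"
proof -
  have "(\<lambda>k. F (X k) \<bullet> grad \<rho> l) \<longlonglongrightarrow> 0"
    using bdry lim X unfolding tendsto_at_iff_sequentially comp_def by auto
  moreover have "(\<lambda>k. F (X k) \<bullet> (grad \<rho> (X k) - grad \<rho> l)) \<longlonglongrightarrow> 0"
  proof (rule Lim_null_comparison)
    have "\<bar>F (X k) \<bullet> (grad \<rho> (X k) - grad \<rho> l)\<bar> \<le> B * norm (grad \<rho> (X k) - grad \<rho> l)" for k
      using Cauchy_Schwarz_ineq2 mult_right_mono[OF F[OF X(1)] norm_ge_zero] by (rule order_trans)
    then show "\<forall>\<^sub>F k in sequentially. norm (F (X k) \<bullet> (grad \<rho> (X k) - grad \<rho> l))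
        \<le> B * norm (grad \<rho> (X k) - grad \<rho> l)"
      by (intro always_eventually allI) simp
    have "(\<lambda>k. grad \<rho> (X k)) \<longlonglongrightarrow> grad \<rho> l"
      using continuous_grad_rho[of UNIV] lim
      by (metis continuous_on_eq_continuous_at isCont_tendsto_compose open_UNIV UNIV_I)
    then show "(\<lambda>k. B * norm (grad \<rho> (X k) - grad \<rho> l)) \<longlonglongrightarrow> 0"
      by (intro tendsto_mult_right_zero tendsto_norm_zero LIM_zero)
  qed
  ultimately show ?thesis
    using tendsto_add by (fastforce simp: inner_diff_right)
qed

text \<open>Points violating the bound would accumulate at a boundary point, where the normal
  component of \<open>F\<close> tends to zero while \<open>|\<nabla>\<rho>|\<^sup>2\<close> stays positive.\<close>

lemma normal_component_small_near_frontier: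
  assumes F: "\<And>x. x \<in> \<Omega> \<Longrightarrow> norm (F x) \<le> B"
    and "zero_normal_trace F" and \<eta>: "\<eta> > 0"
  shows "\<exists>\<delta>>0. \<forall>x\<in>\<Omega>. \<rho> x > - \<delta> \<longrightarrow> \<bar>F x \<bullet> grad \<rho> x\<bar> \<le> \<eta> * (grad \<rho> x \<bullet> grad \<rho> x)"
proof (rule ccontr)
  assume "\<not> ?thesis"
  then have "\<forall>k::nat. \<exists>x. x \<in> \<Omega> \<and> \<rho> x > - (1 / real (Suc k)) \<and>
      \<bar>F x \<bullet> grad \<rho> x\<bar> > \<eta> * (grad \<rho> x \<bullet> grad \<rho> x)"
    by (metis not_le of_nat_0_less_iff zero_less_Suc zero_less_divide_1_iff)
  then obtain X where X: "\<And>k. X k \<in> \<Omega>" "\<And>k. \<rho> (X k) > - (1 / real (Suc k))"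
      "\<And>k. \<bar>F (X k) \<bullet> grad \<rho> (X k)\<bar> > \<eta> * (grad \<rho> (X k) \<bullet> grad \<rho> (X k))"
    by metis
  have "\<forall>k. X k \<in> closure \<Omega>" using X(1) closure_subset by blast
  moreover have "compact (closure \<Omega>)" using bounded_domain by simp
  ultimately obtain l s where "strict_mono s" and lim: "(X \<circ> s) \<longlonglongrightarrow> l"
    using seq_compactE[OF compact_imp_seq_compact] by metis
  have "(\<lambda>k. \<rho> (X k)) \<longlonglongrightarrow> 0"
  proof (rule Lim_null_comparison)
    have "norm (\<rho> (X k)) \<le> 1 / real (Suc k)" for k
      using X(1,2)[of k] domain_eq by (auto simp: abs_le_iff)
    then show "\<forall>\<^sub>F k in sequentially. norm (\<rho> (X k)) \<le> 1 / real (Suc k)"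
      by (intro always_eventually allI)
  qed (rule LIMSEQ_Suc[OF lim_1_over_n])
  then have "(\<lambda>k. \<rho> ((X \<circ> s) k)) \<longlonglongrightarrow> 0"
    using LIMSEQ_subseq_LIMSEQ[OF _ \<open>strict_mono s\<close>] by (simp add: o_def)
  then have l: "l \<in> frontier \<Omega>" "\<rho> l = 0"
    using rho_tendsto_0_imp_frontier[OF _ _ lim] X(1) by auto
  have "((\<lambda>y. F y \<bullet> grad \<rho> l) \<longlongrightarrow> 0) (at l within \<Omega>)"
    using \<open>zero_normal_trace F\<close> l(1) unfolding zero_normal_trace_def by blast
  moreover have "l \<notin> \<Omega>" using l(2) domain_eq by auto
  ultimately have "(\<lambda>k. F ((X \<circ> s) k) \<bullet> grad \<rho> ((X \<circ> s) k)) \<longlonglongrightarrow> 0"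
    using normal_component_tendsto_0[of F B l "X \<circ> s", OF F] X(1) lim by auto
  then have "(\<lambda>k. \<bar>F ((X \<circ> s) k) \<bullet> grad \<rho> ((X \<circ> s) k)\<bar>) \<longlonglongrightarrow> 0"
    by (rule tendsto_rabs_zero)
  then have "\<forall>\<^sub>F k in sequentially. \<bar>F ((X \<circ> s) k) \<bullet> grad \<rho> ((X \<circ> s) k)\<bar>
      < \<eta> * (grad \<rho> l \<bullet> grad \<rho> l) / 2"
    by (rule order_tendstoD(2)) (use \<eta> grad_nonzero[OF l(2)] in simp)
  moreover have "(\<lambda>k. grad \<rho> ((X \<circ> s) k)) \<longlonglongrightarrow> grad \<rho> l"
    using continuous_grad_rho[of UNIV] lim
    by (metis continuous_on_eq_continuous_at isCont_tendsto_compose open_UNIV UNIV_I)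
  then have "(\<lambda>k. \<eta> * (grad \<rho> ((X \<circ> s) k) \<bullet> grad \<rho> ((X \<circ> s) k)))
      \<longlonglongrightarrow> \<eta> * (grad \<rho> l \<bullet> grad \<rho> l)"
    by (intro tendsto_intros)
  then have "\<forall>\<^sub>F k in sequentially. \<eta> * (grad \<rho> l \<bullet> grad \<rho> l) / 2
      < \<eta> * (grad \<rho> ((X \<circ> s) k) \<bullet> grad \<rho> ((X \<circ> s) k))"
    by (rule order_tendstoD(1)) (use \<eta> grad_nonzero[OF l(2)] in simp)
  ultimately have "\<forall>\<^sub>F k in sequentially. \<bar>F ((X \<circ> s) k) \<bullet> grad \<rho> ((X \<circ> s) k)\<bar>
      < \<eta> * (grad \<rho> ((X \<circ> s) k) \<bullet> grad \<rho> ((X \<circ> s) k))"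
    by eventually_elim simp
  then obtain k where "\<bar>F (X (s k)) \<bullet> grad \<rho> (X (s k))\<bar> < \<eta> * (grad \<rho> (X (s k)) \<bullet> grad \<rho> (X (s k)))"
    unfolding eventually_sequentially by auto
  then show False using X(3)[of "s k"] by simp
qed

lemma layer_grad_rho_integral_bound:
  obtains C where "\<And>e. e > 0 \<Longrightarrow> integral \<Omega> (\<lambda>x. layer e x * (grad \<rho> x \<bullet> grad \<rho> x)) \<le> C"
proof -
  obtain M where M: "\<And>x. x \<in> \<Omega> \<Longrightarrow> \<bar>divg (grad \<rho>) x\<bar> \<le> M"
    using divg_bound[OF regular_field_grad_rho] by blast
  have "integral \<Omega> (\<lambda>x. layer e x * (grad \<rho> x \<bullet> grad \<rho> x)) \<le> integral \<Omega> (\<lambda>x. M)" if e: "e > 0" for e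
    unfolding integral_cutoff_divg(3)[OF regular_field_grad_rho e, symmetric]
  proof (rule integral_le[OF integral_cutoff_divg(1)[OF regular_field_grad_rho e]])
    show "(\<lambda>x. M) integrable_on \<Omega>" using integrable_on_const[OF lmeasurable_domain] .
    show "cutoff e x * divg (grad \<rho>) x \<le> M" if "x \<in> \<Omega>" for x
    proof -
      have "\<bar>cutoff e x * divg (grad \<rho>) x\<bar> \<le> 1 * M"
        unfolding abs_mult using abs_cutoff_le_1 M[OF that] by (intro mult_mono) auto
      then show ?thesis by (simp add: abs_le_iff)
    qed
  qed
  then show ?thesis using that by blast
qed

lemma integral_cutoff_divg_tendsto:
  assumes F: "regular_field \<Omega> F"
  shows "(\<lambda>k. integral \<Omega> (\<lambda>x. cutoff (1 / Suc k) x * divg F x)) \<longlonglongrightarrow> integral \<Omega> (divg F)"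
proof -
  obtain B where B: "\<And>x. x \<in> \<Omega> \<Longrightarrow> \<bar>divg F x\<bar> \<le> B" using divg_bound[OF F] by blast
  show ?thesis
  proof (rule dominated_convergence(2)[where h="\<lambda>x. 1 * B"])
    show "(\<lambda>x. cutoff (1 / Suc k) x * divg F x) integrable_on \<Omega>" for k
      using integral_cutoff_divg(1)[OF F] by simp
    show "(\<lambda>x. 1 * B) integrable_on \<Omega>" using integrable_on_const[OF lmeasurable_domain] by simp
    show "norm (cutoff (1 / Suc k) x * divg F x) \<le> 1 * B" if "x \<in> \<Omega>" for k x
      unfolding real_norm_def abs_mult using abs_cutoff_le_1 B[OF that] by (intro mult_mono) auto
    show "(\<lambda>k. cutoff (1 / Suc k) x * divg F x) \<longlonglongrightarrow> divg F x" if x: "x \<in> \<Omega>" for x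
    proof (rule tendsto_eventually)
      have "\<forall>\<^sub>F k in sequentially. 1 / real (Suc k) < - \<rho> x / 2"
        using x domain_eq by (intro order_tendstoD(2)[OF LIMSEQ_Suc[OF lim_1_over_n]]) auto
      then show "\<forall>\<^sub>F k in sequentially. cutoff (1 / Suc k) x * divg F x = divg F x"
        by eventually_elim (simp add: cutoff_eq_1)
    qed
  qed
qed

text \<open>The boundary-layer integrals of \<open>F \<bullet> \<nabla>\<rho>\<close> become as small as we like, because
  \<open>|F \<bullet> \<nabla>\<rho>| \<le> \<eta> |\<nabla>\<rho>|\<^sup>2\<close> in a thin layer and the layer integrals of \<open>|\<nabla>\<rho>|\<^sup>2\<close>
  stay bounded.\<close>

theorem integral_divg_eq_0:
  assumes F: "regular_field \<Omega> F"
    and bdry: "zero_normal_trace F"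
  shows "integral \<Omega> (divg F) = 0"
proof -
  obtain C where C: "\<And>e. e > 0 \<Longrightarrow> integral \<Omega> (\<lambda>x. layer e x * (grad \<rho> x \<bullet> grad \<rho> x)) \<le> C"
    using layer_grad_rho_integral_bound by blast
  obtain BF where BF: "\<And>x. x \<in> \<Omega> \<Longrightarrow> norm (F x) \<le> BF"
    using F unfolding regular_field_def by blast
  have bound: "\<bar>integral \<Omega> (divg F)\<bar> \<le> \<eta> * C" if \<eta>: "\<eta> > 0" for \<eta>
  proof -
    obtain \<delta> where "\<delta> > 0"
      and small: "\<And>x. x \<in> \<Omega> \<Longrightarrow> \<rho> x > - \<delta> \<Longrightarrow> \<bar>F x \<bullet> grad \<rho> x\<bar> \<le> \<eta> * (grad \<rho> x \<bullet> grad \<rho> x)"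
      using normal_component_small_near_frontier[OF BF bdry \<eta>] by blast
    have small_cutoff: "\<bar>integral \<Omega> (\<lambda>x. cutoff e x * divg F x)\<bar> \<le> \<eta> * C"
      if e: "e > 0" "2 * e < \<delta>" for e
    proof -
      have "\<bar>layer e x * (F x \<bullet> grad \<rho> x)\<bar> \<le> \<eta> * (layer e x * (grad \<rho> x \<bullet> grad \<rho> x))"
        if "x \<in> \<Omega>" for x
      proof (cases "\<rho> x \<le> - 2 * e")
        case False
        then show ?thesis
          using mult_left_mono[OF small[OF that] layer_nonneg[OF e(1)]] e layer_nonneg[OF e(1)]
          by (simp add: abs_mult algebra_simps)
      qed (simp add: layer_eq_0 e)
      then have "\<bar>integral \<Omega> (\<lambda>x. layer e x * (F x \<bullet> grad \<rho> x))\<bar>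
          \<le> integral \<Omega> (\<lambda>x. \<eta> * (layer e x * (grad \<rho> x \<bullet> grad \<rho> x)))"
        using integral_norm_bound_integral[OF integral_cutoff_divg(2)[OF F e(1)]
            integrable_on_cmult_left[OF integral_cutoff_divg(2)[OF regular_field_grad_rho e(1)]]]
        by simp
      also have "\<dots> \<le> \<eta> * C" using C[OF e(1)] \<eta> by simp
      finally show ?thesis using integral_cutoff_divg(3)[OF F e(1)] by simp
    qed
    have "(\<lambda>k. 2 * (1 / real (Suc k))) \<longlonglongrightarrow> 0"
      by (intro tendsto_mult_right_zero LIMSEQ_Suc[OF lim_1_over_n])
    then have "\<forall>\<^sub>F k in sequentially. 2 * (1 / real (Suc k)) < \<delta>"
      using \<open>\<delta> > 0\<close> by (rule order_tendstoD(2))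
    then have "\<forall>\<^sub>F k in sequentially. \<bar>integral \<Omega> (\<lambda>x. cutoff (1 / Suc k) x * divg F x)\<bar> \<le> \<eta> * C"
      by (rule eventually_mono) (rule small_cutoff, simp_all)
    then show ?thesis
      by (rule tendsto_upperbound[OF tendsto_rabs[OF integral_cutoff_divg_tendsto[OF F]]]) simp
  qed
  have "(\<lambda>k. (1 / real (Suc k)) * C) \<longlonglongrightarrow> 0"
    by (intro tendsto_mult_left_zero LIMSEQ_Suc[OF lim_1_over_n])
  moreover have "\<forall>\<^sub>F k in sequentially. \<bar>integral \<Omega> (divg F)\<bar> \<le> (1 / real (Suc k)) * C"
    using bound[of "1 / real (Suc k)" for k] by (intro always_eventually allI) simp
  ultimately have "\<bar>integral \<Omega> (divg F)\<bar> \<le> 0"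
    by (rule tendsto_lowerbound) simp
  then show ?thesis by simp
qed

end

section \<open>Integrals depending on a parameter\<close>

lemma continuous_on_parametric_integral:
  fixes P :: "pt \<Rightarrow> real \<Rightarrow> real"
  assumes S: "S \<in> lmeasurable" and C: "compact C" "S \<subseteq> C" and T: "compact T"
    and P: "continuous_on (C \<times> T) (\<lambda>(x, s). P x s)"
  shows "continuous_on T (\<lambda>s. integral S (\<lambda>x. P x s))"
proof (rule continuous_on_sequentiallyI)
  obtain B where B: "\<And>z. z \<in> C \<times> T \<Longrightarrow> \<bar>(\<lambda>(x, s). P x s) z\<bar> \<le> B"
    using continuous_on_compact_abs_bound[OF compact_Times[OF C(1) T] P] by blast
  fix u a assume u: "\<forall>n. u n \<in> T" and a: "a \<in> T" and "u \<longlonglongrightarrow> a"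
  show "(\<lambda>n. integral S (\<lambda>x. P x (u n))) \<longlonglongrightarrow> integral S (\<lambda>x. P x a)"
  proof (rule dominated_convergence(2)[where h="\<lambda>x. B"])
    show "(\<lambda>x. P x (u n)) integrable_on S" for n
    proof (rule continuous_bounded_integrable[OF S])
      have "continuous_on S (\<lambda>x. (\<lambda>(x, s). P x s) (x, u n))"
        by (rule continuous_on_compose2[OF P]) (use u C in \<open>auto intro!: continuous_intros\<close>)
      then show "continuous_on S (\<lambda>x. P x (u n))" by simp
      show "\<bar>P x (u n)\<bar> \<le> B" if "x \<in> S" for x using B[of "(x, u n)"] that u C by auto
    qed
    show "(\<lambda>x. B) integrable_on S" using integrable_on_const[OF S] .
    show "norm (P x (u n)) \<le> B" if "x \<in> S" for n x using B[of "(x, u n)"] that u C by auto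
    show "(\<lambda>n. P x (u n)) \<longlonglongrightarrow> P x a" if "x \<in> S" for x
    proof -
      have "((\<lambda>n. (\<lambda>(x, s). P x s) (x, u n)) \<longlongrightarrow> (\<lambda>(x, s). P x s) (x, a)) sequentially"
        by (rule continuous_on_tendsto_compose[OF P])
           (use that C a u \<open>u \<longlonglongrightarrow> a\<close> in \<open>auto intro!: tendsto_intros\<close>)
      then show ?thesis by simp
    qed
  qed
qed

lemma has_real_derivative_parametric_integral:
  fixes f f' :: "pt \<Rightarrow> real \<Rightarrow> real"
  assumes S: "S \<in> lmeasurable" and t: "a < t" "t < b"
    and f': "\<And>x s. x \<in> S \<Longrightarrow> a < s \<Longrightarrow> s < b \<Longrightarrow> ((\<lambda>s. f x s) has_real_derivative f' x s) (at s)"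
    and B: "\<And>x s. x \<in> S \<Longrightarrow> a < s \<Longrightarrow> s < b \<Longrightarrow> \<bar>f' x s\<bar> \<le> B"
    and f: "\<And>s. a < s \<Longrightarrow> s < b \<Longrightarrow> (\<lambda>x. f x s) integrable_on S"
  shows "((\<lambda>s. integral S (\<lambda>x. f x s)) has_real_derivative integral S (\<lambda>x. f' x t)) (at t)"
proof -
  define V where "V = {h. a < t + h \<and> t + h < b}"
  have "open V" unfolding V_def by (intro open_Collect_conj open_Collect_less continuous_intros)
  moreover have "0 \<in> V" using t by (simp add: V_def)
  moreover have "(\<lambda>k. (integral S (\<lambda>x. f x (t + X k)) - integral S (\<lambda>x. f x t)) / X k)
      \<longlonglongrightarrow> integral S (\<lambda>x. f' x t)" if X: "\<forall>k. X k \<in> V - {0}" "X \<longlonglongrightarrow> 0" for X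
  proof -
    define q where "q k x = (f x (t + X k) - f x t) / X k" for k x
    have q_int: "q k integrable_on S" for k
    proof -
      have "(\<lambda>x. (f x (t + X k) - f x t) * (1 / X k)) integrable_on S"
        by (intro integrable_on_mult_left integrable_diff f) (use X(1) t in \<open>auto simp: V_def\<close>)
      then show ?thesis by (simp add: q_def[abs_def])
    qed
    have "(\<lambda>k. integral S (q k)) \<longlonglongrightarrow> integral S (\<lambda>x. f' x t)"
    proof (rule dominated_convergence(2)[where h="\<lambda>x. B", OF q_int])
      show "(\<lambda>x. B) integrable_on S" using integrable_on_const[OF S] .
      show "norm (q k x) \<le> B" if x: "x \<in> S" for k x
      proof -
        have "norm ((\<lambda>s. f x s) (t + X k) - (\<lambda>s. f x s) t) \<le> B * norm ((t + X k) - t)"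
          by (rule field_differentiable_bound[where S="{a<..<b}" and f'="f' x"])
             (use f' B x X(1) t in \<open>auto simp: V_def intro: has_field_derivative_at_within\<close>)
        then show ?thesis using X(1) by (simp add: q_def V_def divide_le_eq abs_mult mult.commute)
      qed
      show "(\<lambda>k. q k x) \<longlonglongrightarrow> f' x t" if "x \<in> S" for x
        using f'[OF that t] X unfolding DERIV_def tendsto_at_iff_sequentially comp_def q_def
        by simp
    qed
    moreover have "integral S (q k) = (integral S (\<lambda>x. f x (t + X k)) - integral S (\<lambda>x. f x t)) / X k"
      for k
      using integral_diff[OF f f[OF t], of "t + X k"] X(1)
      unfolding q_def[abs_def] by (simp add: V_def)
    ultimately show ?thesis by simp
  qed
  ultimately have "((\<lambda>h. (integral S (\<lambda>x. f x (t + h)) - integral S (\<lambda>x. f x t)) / h)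
      \<longlongrightarrow> integral S (\<lambda>x. f' x t)) (at 0)"
    by (subst at_within_open[symmetric, of 0 V]) (auto simp: tendsto_at_iff_sequentially comp_def)
  then show ?thesis unfolding DERIV_def .
qed

section \<open>Regularity of \<open>C\<^sup>2\<^sup>,\<^sup>1\<close> functions\<close>

lemma finite_family_abs_bound:
  fixes f :: "'i::finite \<Rightarrow> 'a \<Rightarrow> real"
  assumes "\<And>i. \<exists>B. \<forall>x\<in>S. \<bar>f i x\<bar> \<le> B"
  shows "\<exists>B. \<forall>i. \<forall>x\<in>S. \<bar>f i x\<bar> \<le> B"
proof -
  obtain B where B: "\<And>i. \<forall>x\<in>S. \<bar>f i x\<bar> \<le> B i" using assms by metis
  have "\<bar>f i x\<bar> \<le> (\<Sum>j\<in>UNIV. \<bar>B j\<bar>)" if "x \<in> S" for i x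
    using B[of i] that member_le_sum[of i UNIV "\<lambda>j. \<bar>B j\<bar>"] by force
  then show ?thesis by blast
qed

lemma ext_cont_slice:
  assumes "ext_cont \<Omega> F" and t: "t > 0" and "bounded \<Omega>"
  shows "continuous_on \<Omega> (\<lambda>x. F x t)" and "\<exists>B. \<forall>x\<in>\<Omega>. \<bar>F x t\<bar> \<le> B"
proof -
  obtain G where G: "continuous_on (closure \<Omega> \<times> {0<..}) G"
    "\<And>x t. x \<in> \<Omega> \<Longrightarrow> t > 0 \<Longrightarrow> G (x, t) = F x t"
    using assms(1) unfolding ext_cont_def by blast
  have c: "continuous_on (closure \<Omega>) (\<lambda>x. G (x, t))"
    by (rule continuous_on_compose2[OF G(1)]) (use t in \<open>auto intro!: continuous_intros\<close>)
  show "continuous_on \<Omega> (\<lambda>x. F x t)"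
    using continuous_on_subset[OF c closure_subset] by (rule continuous_on_eq) (use G(2) t in auto)
  obtain B where "\<And>x. x \<in> closure \<Omega> \<Longrightarrow> \<bar>G (x, t)\<bar> \<le> B"
    using continuous_on_compact_abs_bound[OF _ c] assms(3) by (metis compact_closure)
  then show "\<exists>B. \<forall>x\<in>\<Omega>. \<bar>F x t\<bar> \<le> B" using G(2) t closure_subset by (metis subsetD)
qed

lemma C21_slice:
  assumes C: "C21 \<Omega> f" and t: "t > 0" and b: "bounded \<Omega>"
  shows "continuous_on (closure \<Omega>) (\<lambda>y. f y t)"
    and "\<exists>B. \<forall>x\<in>closure \<Omega>. \<bar>f x t\<bar> \<le> B"
    and "\<And>i x. x \<in> \<Omega> \<Longrightarrow> has_pd i (\<lambda>y. f y t) x (pd i (\<lambda>y. f y t) x)"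
    and "\<And>i. continuous_on \<Omega> (pd i (\<lambda>y. f y t))"
    and "\<exists>B. \<forall>i. \<forall>x\<in>\<Omega>. \<bar>pd i (\<lambda>y. f y t) x\<bar> \<le> B"
    and "\<And>i j x. x \<in> \<Omega> \<Longrightarrow> has_pd j (pd i (\<lambda>y. f y t)) x (pd j (pd i (\<lambda>y. f y t)) x)"
    and "\<And>i j. continuous_on \<Omega> (pd j (pd i (\<lambda>y. f y t)))"
    and "\<exists>B. \<forall>i j. \<forall>x\<in>\<Omega>. \<bar>pd j (pd i (\<lambda>y. f y t)) x\<bar> \<le> B"
proof -
  have "continuous_on (closure \<Omega> \<times> {0..}) (\<lambda>(x, t). f x t)" using C unfolding C21_def by blast
  then have "continuous_on (closure \<Omega>) (\<lambda>y. (\<lambda>(x, t). f x t) (y, t))"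
    by (rule continuous_on_compose2) (use t in \<open>auto intro!: continuous_intros\<close>)
  then show c: "continuous_on (closure \<Omega>) (\<lambda>y. f y t)" by simp
  show "\<exists>B. \<forall>x\<in>closure \<Omega>. \<bar>f x t\<bar> \<le> B"
    using continuous_on_compact_abs_bound[OF _ c] b by (metis compact_closure)
  show "\<And>i x. x \<in> \<Omega> \<Longrightarrow> has_pd i (\<lambda>y. f y t) x (pd i (\<lambda>y. f y t) x)"
    and "\<And>i j x. x \<in> \<Omega> \<Longrightarrow> has_pd j (pd i (\<lambda>y. f y t)) x (pd j (pd i (\<lambda>y. f y t)) x)"
    using C t unfolding C21_def by (auto intro: pdiff_imp_has_pd)
  have e1: "ext_cont \<Omega> (\<lambda>x t. pd i (\<lambda>y. f y t) x)" for i using C unfolding C21_def by blast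
  have e2: "ext_cont \<Omega> (\<lambda>x t. pd j (pd i (\<lambda>y. f y t)) x)" for i j using C unfolding C21_def by blast
  show "\<And>i. continuous_on \<Omega> (pd i (\<lambda>y. f y t))"
    and "\<And>i j. continuous_on \<Omega> (pd j (pd i (\<lambda>y. f y t)))"
    using ext_cont_slice(1)[OF e1 t b] ext_cont_slice(1)[OF e2 t b] by simp_all
  show "\<exists>B. \<forall>i. \<forall>x\<in>\<Omega>. \<bar>pd i (\<lambda>y. f y t) x\<bar> \<le> B"
    by (rule finite_family_abs_bound) (use ext_cont_slice(2)[OF e1 t b] in simp)
  have "\<exists>B. \<forall>ij. \<forall>x\<in>\<Omega>. \<bar>(\<lambda>ij x. pd (snd ij) (pd (fst ij) (\<lambda>y. f y t)) x) ij x\<bar> \<le> B"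
    by (rule finite_family_abs_bound) (use ext_cont_slice(2)[OF e2 t b] in simp)
  then show "\<exists>B. \<forall>i j. \<forall>x\<in>\<Omega>. \<bar>pd j (pd i (\<lambda>y. f y t)) x\<bar> \<le> B" by auto
qed

lemma regular_field_of_components:
  fixes F :: "pt \<Rightarrow> pt"
  assumes "\<And>i x. x \<in> S \<Longrightarrow> has_pd i (\<lambda>y. F y $ i) x (pd i (\<lambda>y. F y $ i) x)"
    and c: "\<And>i. continuous_on S (\<lambda>y. F y $ i)"
    and b: "\<exists>B. \<forall>i. \<forall>x\<in>S. \<bar>F x $ i\<bar> \<le> B"
    and "\<And>i. continuous_on S (pd i (\<lambda>y. F y $ i))"
    and "\<exists>B. \<forall>i. \<forall>x\<in>S. \<bar>pd i (\<lambda>y. F y $ i) x\<bar> \<le> B"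
  shows "regular_field S F"
  unfolding regular_field_def
proof (intro conjI)
  have "continuous_on S (\<lambda>y. \<chi> i. F y $ i)" by (intro continuous_on_vec_lambda c)
  then show "continuous_on S F" by simp
  obtain B where B: "\<And>i x. x \<in> S \<Longrightarrow> \<bar>F x $ i\<bar> \<le> B" using b by blast
  have "norm (F x) \<le> (\<Sum>i\<in>(UNIV::2 set). B)" if "x \<in> S" for x
  proof -
    have "(\<Sum>i\<in>UNIV. \<bar>F x $ i\<bar>) \<le> (\<Sum>i\<in>(UNIV::2 set). B)"
      by (rule sum_mono) (use B[OF that] in auto)
    then show ?thesis using norm_le_l1_cart[of "F x"] by linarith
  qed
  then show "\<exists>B. \<forall>x\<in>S. norm (F x) \<le> B" by blast
qed (use assms in auto)

lemma regular_field_grad: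
  assumes "C21 \<Omega> f" and "t > 0" and "bounded \<Omega>"
  shows "regular_field \<Omega> (grad (\<lambda>y. f y t))"
proof -
  note f = C21_slice[OF assms]
  have "\<exists>B. \<forall>i. \<forall>x\<in>\<Omega>. \<bar>pd i (pd i (\<lambda>y. f y t)) x\<bar> \<le> B" using f(8) by blast
  then show ?thesis
    using f(3-7) by (intro regular_field_of_components) (auto simp: grad_def)
qed

lemma regular_field_slice:
  assumes "\<And>i. C21 \<Omega> (ucomp u i)" and t: "t > 0" and b: "bounded \<Omega>"
  shows "regular_field \<Omega> (\<lambda>y. u y t)"
proof -
  have C: "C21 \<Omega> (\<lambda>x t. u x t $ i)" for i using assms(1)[of i] by (simp add: ucomp_def)
  note f = C21_slice[OF C t b]
  show ?thesis
  proof (rule regular_field_of_components)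
    show "\<exists>B. \<forall>i. \<forall>x\<in>\<Omega>. \<bar>u x t $ i\<bar> \<le> B"
      by (rule finite_family_abs_bound) (use f(2) closure_subset in fastforce)
    show "\<exists>B. \<forall>i. \<forall>x\<in>\<Omega>. \<bar>pd i (\<lambda>y. u y t $ i) x\<bar> \<le> B"
      by (rule finite_family_abs_bound) (use f(5) in fastforce)
  qed (use f(3,4) continuous_on_subset[OF f(1) closure_subset] in auto)
qed

lemma pd_scaleR_component:
  assumes "has_pd i (\<lambda>y. a y) x (pd i a x)" and "has_pd i (\<lambda>y. V y $ i) x (pd i (\<lambda>y. V y $ i) x)"
  shows "pd i (\<lambda>y. (a y *\<^sub>R V y) $ i) x = pd i a x * V x $ i + a x * pd i (\<lambda>y. V y $ i) x"
    and "has_pd i (\<lambda>y. (a y *\<^sub>R V y) $ i) x (pd i (\<lambda>y. (a y *\<^sub>R V y) $ i) x)"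
  using has_pd_mult[OF assms] has_pd_imp_pd by auto

lemma regular_field_scaleR:
  assumes C: "C21 \<Omega> a" and V: "regular_field \<Omega> V" and t: "t > 0" and b: "bounded \<Omega>"
  shows "regular_field \<Omega> (\<lambda>y. a y t *\<^sub>R V y)"
proof -
  note a = C21_slice[OF C t b]
  have V_pd: "\<And>i x. x \<in> \<Omega> \<Longrightarrow> has_pd i (\<lambda>y. V y $ i) x (pd i (\<lambda>y. V y $ i) x)"
    and V_cont: "continuous_on \<Omega> V" "\<And>i. continuous_on \<Omega> (pd i (\<lambda>y. V y $ i))"
    using V unfolding regular_field_def by auto
  obtain BV BdV where BV: "0 \<le> BV" "\<And>x. x \<in> \<Omega> \<Longrightarrow> norm (V x) \<le> BV"
    and BdV: "0 \<le> BdV" "\<And>i x. x \<in> \<Omega> \<Longrightarrow> \<bar>pd i (\<lambda>y. V y $ i) x\<bar> \<le> BdV"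
    using regular_field_bounds[OF V] by blast
  obtain Ba0 where "\<And>x. x \<in> \<Omega> \<Longrightarrow> \<bar>a x t\<bar> \<le> Ba0"
    using a(2) closure_subset by blast
  then have Ba: "\<And>x. x \<in> \<Omega> \<Longrightarrow> \<bar>a x t\<bar> \<le> \<bar>Ba0\<bar>" using abs_ge_self order_trans by blast
  obtain Bda0 where "\<And>i x. x \<in> \<Omega> \<Longrightarrow> \<bar>pd i (\<lambda>y. a y t) x\<bar> \<le> Bda0"
    using a(5) by blast
  then have Bda: "\<And>i x. x \<in> \<Omega> \<Longrightarrow> \<bar>pd i (\<lambda>y. a y t) x\<bar> \<le> \<bar>Bda0\<bar>"
    using abs_ge_self order_trans by blast
  note pd_eq = pd_scaleR_component[OF a(3) V_pd]
  have V_comp: "\<bar>V x $ i\<bar> \<le> BV" if "x \<in> \<Omega>" for i x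
    using BV(2)[OF that] component_le_norm_cart[of "V x" i] by linarith
  show ?thesis
  proof (rule regular_field_of_components)
    show "has_pd i (\<lambda>y. (a y t *\<^sub>R V y) $ i) x (pd i (\<lambda>y. (a y t *\<^sub>R V y) $ i) x)"
      if "x \<in> \<Omega>" for i x
      using pd_eq(2)[OF that that] .
    show "continuous_on \<Omega> (\<lambda>y. (a y t *\<^sub>R V y) $ i)" for i
      using continuous_on_subset[OF a(1) closure_subset] V_cont(1) by (auto intro!: continuous_intros)
    show "\<exists>B. \<forall>i. \<forall>x\<in>\<Omega>. \<bar>(a x t *\<^sub>R V x) $ i\<bar> \<le> B"
      using Ba V_comp BV(1) by (intro exI[of _ "\<bar>Ba0\<bar> * BV"] allI ballI)
        (auto simp: abs_mult intro!: mult_mono)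
    show "continuous_on \<Omega> (pd i (\<lambda>y. (a y t *\<^sub>R V y) $ i))" for i
      using pd_eq(1)
      by (intro continuous_on_eq[OF _ pd_eq(1)[symmetric]])
         (auto intro!: continuous_intros a(4) V_cont continuous_on_subset[OF a(1) closure_subset])
    have "\<bar>pd i (\<lambda>y. (a y t *\<^sub>R V y) $ i) x\<bar> \<le> \<bar>Bda0\<bar> * BV + \<bar>Ba0\<bar> * BdV" if "x \<in> \<Omega>" for i x
    proof -
      have "\<bar>pd i (\<lambda>y. a y t) x * V x $ i\<bar> \<le> \<bar>Bda0\<bar> * BV"
        using Bda[OF that, of i] V_comp[OF that] BV(1) by (auto simp: abs_mult intro!: mult_mono)
      moreover have "\<bar>a x t * pd i (\<lambda>y. V y $ i) x\<bar> \<le> \<bar>Ba0\<bar> * BdV"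
        using Ba[OF that] BdV(2)[OF that] BdV(1) by (auto simp: abs_mult intro!: mult_mono)
      ultimately show ?thesis
        unfolding pd_eq(1)[OF that that] by (smt (verit) abs_triangle_ineq)
    qed
    then show "\<exists>B. \<forall>i. \<forall>x\<in>\<Omega>. \<bar>pd i (\<lambda>y. (a y t *\<^sub>R V y) $ i) x\<bar> \<le> B" by blast
  qed
qed

section \<open>Integrated equations\<close>

lemma divg_grad: "divg (grad g) = lap g"
  by (rule ext) (simp add: divg_def lap_def grad_def)

context smooth_domain
begin

lemma has_integral_divg_eq_0:
  assumes "regular_field \<Omega> F" and "zero_normal_trace F"
  shows "(divg F has_integral 0) \<Omega>"
  using integrable_integral[OF integrable_divg[OF assms(1)]] integral_divg_eq_0[OF assms] by simp

lemma zero_normal_trace_scaleR: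
  assumes "continuous_on (closure \<Omega>) a" and "zero_normal_trace F"
  shows "zero_normal_trace (\<lambda>y. a y *\<^sub>R F y)"
  unfolding zero_normal_trace_def
proof
  fix x assume x: "x \<in> frontier \<Omega>"
  then have "(a \<longlongrightarrow> a x) (at x within \<Omega>)"
    using assms(1) closure_subset unfolding frontier_def continuous_on_def
    by (metis Diff_iff tendsto_within_subset)
  then have "((\<lambda>y. a y * (F y \<bullet> grad \<rho> x)) \<longlongrightarrow> a x * 0) (at x within \<Omega>)"
    using assms(2) x unfolding zero_normal_trace_def by (intro tendsto_mult) auto
  then show "((\<lambda>y. (a y *\<^sub>R F y) \<bullet> grad \<rho> x) \<longlongrightarrow> 0) (at x within \<Omega>)" by simp
qed

lemma zero_normal_trace_vanishing:
  assumes "continuous_on (closure \<Omega>) F" and "\<And>x. x \<in> frontier \<Omega> \<Longrightarrow> F x = 0"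
  shows "zero_normal_trace F"
  unfolding zero_normal_trace_def
proof
  fix x assume x: "x \<in> frontier \<Omega>"
  then have "(F \<longlongrightarrow> F x) (at x within \<Omega>)"
    using assms(1) closure_subset unfolding frontier_def continuous_on_def
    by (metis Diff_iff tendsto_within_subset)
  then show "((\<lambda>y. F y \<bullet> grad \<rho> x) \<longlongrightarrow> 0) (at x within \<Omega>)"
    using assms(2)[OF x] by (auto intro: tendsto_eq_intros)
qed

lemma zero_normal_trace_of_normal:
  assumes "\<And>x. x \<in> frontier \<Omega> \<Longrightarrow> ((\<lambda>y. F y \<bullet> \<nu> x) \<longlongrightarrow> 0) (at x within \<Omega>)"
    and "\<And>x. x \<in> frontier \<Omega> \<Longrightarrow> \<nu> x = (1 / norm (grad \<rho> x)) *\<^sub>R grad \<rho> x"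
  shows "zero_normal_trace F"
  unfolding zero_normal_trace_def
proof
  fix x assume x: "x \<in> frontier \<Omega>"
  have "((\<lambda>y. norm (grad \<rho> x) * (F y \<bullet> \<nu> x)) \<longlongrightarrow> norm (grad \<rho> x) * 0) (at x within \<Omega>)"
    by (intro tendsto_intros assms(1)[OF x])
  moreover have "norm (grad \<rho> x) * (F y \<bullet> \<nu> x) = F y \<bullet> grad \<rho> x" for y
    using grad_nonzero[OF frontier_imp_rho_eq_0[OF x]] assms(2)[OF x] by simp
  ultimately show "((\<lambda>y. F y \<bullet> grad \<rho> x) \<longlongrightarrow> 0) (at x within \<Omega>)" by simp
qed

lemma has_integral_lap_eq_0:
  assumes "C21 \<Omega> f" and "t > 0" and "zero_normal_trace (grad (\<lambda>y. f y t))"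
  shows "(lap (\<lambda>y. f y t) has_integral 0) \<Omega>"
  using has_integral_divg_eq_0[OF regular_field_grad[OF assms(1,2) bounded_domain] assms(3)]
  by (simp add: divg_grad)

lemma has_integral_chemotaxis_eq_0:
  assumes "C21 \<Omega> n" and "C21 \<Omega> w" and t: "t > 0"
    and "zero_normal_trace (grad (\<lambda>y. w y t))"
  shows "(divg (\<lambda>y. n y t *\<^sub>R grad (\<lambda>z. w z t) y) has_integral 0) \<Omega>"
  by (intro has_integral_divg_eq_0 zero_normal_trace_scaleR assms(4)
      regular_field_scaleR[OF assms(1) regular_field_grad[OF assms(2) t bounded_domain] t bounded_domain]
      C21_slice(1)[OF assms(1) t bounded_domain])

text \<open>Since \<open>\<nabla> \<bullet> u = 0\<close>, the transport term \<open>u \<bullet> \<nabla>f\<close> is the divergence of \<open>f u\<close>.\<close>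

lemma has_integral_transport_eq_0:
  assumes f: "C21 \<Omega> f" and u: "\<And>i. C21 \<Omega> (ucomp u i)" and t: "t > 0"
    and div_u: "\<And>x. x \<in> \<Omega> \<Longrightarrow> divg (\<lambda>y. u y t) x = 0"
    and u_bdry: "\<And>x. x \<in> frontier \<Omega> \<Longrightarrow> u x t = 0"
  shows "((\<lambda>x. u x t \<bullet> grad (\<lambda>y. f y t) x) has_integral 0) \<Omega>"
proof -
  note U = regular_field_slice[OF u t bounded_domain]
  note fU = regular_field_scaleR[OF f U t bounded_domain]
  have u_cont: "continuous_on (closure \<Omega>) (\<lambda>y. u y t)"
  proof -
    have "continuous_on (closure \<Omega>) (\<lambda>y. \<chi> i. ucomp u i y t)"
      by (intro continuous_on_vec_lambda C21_slice(1)[OF u t bounded_domain])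
    then show ?thesis by (simp add: ucomp_def)
  qed
  have "(divg (\<lambda>y. f y t *\<^sub>R u y t) has_integral 0) \<Omega>"
    by (intro has_integral_divg_eq_0[OF fU] zero_normal_trace_scaleR zero_normal_trace_vanishing
        C21_slice(1)[OF f t bounded_domain] u_cont u_bdry)
  moreover have "divg (\<lambda>y. f y t *\<^sub>R u y t) x = u x t \<bullet> grad (\<lambda>y. f y t) x" if x: "x \<in> \<Omega>" for x
  proof -
    have "divg (\<lambda>y. f y t *\<^sub>R u y t) x
        = (\<Sum>i\<in>UNIV. pd i (\<lambda>y. f y t) x * u x t $ i + f x t * pd i (\<lambda>y. u y t $ i) x)"
      unfolding divg_def
      using pd_scaleR_component(1)[OF C21_slice(3)[OF f t bounded_domain x]] U x
      unfolding regular_field_def by simp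
    also have "\<dots> = u x t \<bullet> grad (\<lambda>y. f y t) x + f x t * divg (\<lambda>y. u y t) x"
      by (simp add: sum.distrib sum_distrib_left divg_def inner_vec_def grad_def mult.commute)
    finally show ?thesis using div_u[OF x] by simp
  qed
  ultimately show ?thesis by (rule has_integral_eq[rotated]) simp
qed

lemma has_integral_of_closure:
  fixes f :: "pt \<Rightarrow> real"
  assumes "continuous_on (closure \<Omega>) f"
  shows "(f has_integral integral \<Omega> f) \<Omega>"
  using integrable_integral[OF integrable_on_domain_closure[OF assms]] .

lemma has_integral_dt_n:
  assumes n: "C21 \<Omega> n" and w: "C21 \<Omega> w" and u: "\<And>i. C21 \<Omega> (ucomp u i)" and t: "t > 0"
    and eq: "\<And>x. x \<in> \<Omega> \<Longrightarrow> dt n x t + u x t \<bullet> grad (\<lambda>y. n y t) x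
          = lap (\<lambda>y. n y t) x + chi * divg (\<lambda>y. n y t *\<^sub>R grad (\<lambda>z. w z t) y) x
            + n x t * (r - \<mu> * n x t)"
    and div_u: "\<And>x. x \<in> \<Omega> \<Longrightarrow> divg (\<lambda>y. u y t) x = 0"
    and u_bdry: "\<And>x. x \<in> frontier \<Omega> \<Longrightarrow> u x t = 0"
    and "zero_normal_trace (grad (\<lambda>y. n y t))" and "zero_normal_trace (grad (\<lambda>y. w y t))"
  shows "((\<lambda>x. dt n x t) has_integral
      r * integral \<Omega> (\<lambda>x. n x t) - \<mu> * integral \<Omega> (\<lambda>x. (n x t)\<^sup>2)) \<Omega>"
proof -
  have n_cont: "continuous_on (closure \<Omega>) (\<lambda>x. n x t)" by (rule C21_slice(1)[OF n t bounded_domain])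
  have "((\<lambda>x. lap (\<lambda>y. n y t) x + chi * divg (\<lambda>y. n y t *\<^sub>R grad (\<lambda>z. w z t) y) x
        + (r * n x t - \<mu> * (n x t)\<^sup>2) - u x t \<bullet> grad (\<lambda>y. n y t) x)
      has_integral (0 + chi * 0 + (r * integral \<Omega> (\<lambda>x. n x t)
        - \<mu> * integral \<Omega> (\<lambda>x. (n x t)\<^sup>2)) - 0)) \<Omega>"
    by (intro has_integral_diff has_integral_add has_integral_mult_right
        has_integral_lap_eq_0 has_integral_chemotaxis_eq_0 has_integral_transport_eq_0
        has_integral_of_closure continuous_intros n_cont assms)
  then have "((\<lambda>x. lap (\<lambda>y. n y t) x + chi * divg (\<lambda>y. n y t *\<^sub>R grad (\<lambda>z. w z t) y) x
        + (r * n x t - \<mu> * (n x t)\<^sup>2) - u x t \<bullet> grad (\<lambda>y. n y t) x)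
      has_integral (r * integral \<Omega> (\<lambda>x. n x t) - \<mu> * integral \<Omega> (\<lambda>x. (n x t)\<^sup>2))) \<Omega>"
    by (simp only: add_0_left mult_zero_right diff_zero)
  then show ?thesis
    by (rule has_integral_eq[rotated]) (use eq in \<open>simp add: algebra_simps power2_eq_square\<close>)
qed

lemma integrable_grad_sq:
  assumes "C21 \<Omega> w" and "t > 0"
  shows "(\<lambda>x. (norm (grad (\<lambda>y. w y t) x))\<^sup>2) integrable_on \<Omega>"
proof -
  note G = regular_field_grad[OF assms bounded_domain]
  obtain B where "\<And>x. x \<in> \<Omega> \<Longrightarrow> norm (grad (\<lambda>y. w y t) x) \<le> B"
    using G unfolding regular_field_def by blast
  then have "\<bar>(norm (grad (\<lambda>y. w y t) x))\<^sup>2\<bar> \<le> B\<^sup>2" if "x \<in> \<Omega>" for x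
    using that by (simp add: power_mono)
  moreover have "continuous_on \<Omega> (\<lambda>x. (norm (grad (\<lambda>y. w y t) x))\<^sup>2)"
    using G unfolding regular_field_def by (intro continuous_intros) auto
  ultimately show ?thesis using integrable_on_domain by blast
qed

lemma has_integral_dt_w:
  assumes n: "C21 \<Omega> n" and w: "C21 \<Omega> w" and u: "\<And>i. C21 \<Omega> (ucomp u i)" and t: "t > 0"
    and eq: "\<And>x. x \<in> \<Omega> \<Longrightarrow> dt w x t + u x t \<bullet> grad (\<lambda>y. w y t) x
          = lap (\<lambda>y. w y t) x - (norm (grad (\<lambda>y. w y t) x))\<^sup>2 + n x t"
    and div_u: "\<And>x. x \<in> \<Omega> \<Longrightarrow> divg (\<lambda>y. u y t) x = 0"
    and u_bdry: "\<And>x. x \<in> frontier \<Omega> \<Longrightarrow> u x t = 0"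
    and "zero_normal_trace (grad (\<lambda>y. w y t))"
  shows "((\<lambda>x. dt w x t) has_integral
      integral \<Omega> (\<lambda>x. n x t) - integral \<Omega> (\<lambda>x. (norm (grad (\<lambda>y. w y t) x))\<^sup>2)) \<Omega>"
proof -
  have "((\<lambda>x. lap (\<lambda>y. w y t) x - (norm (grad (\<lambda>y. w y t) x))\<^sup>2 + n x t
        - u x t \<bullet> grad (\<lambda>y. w y t) x)
      has_integral (0 - integral \<Omega> (\<lambda>x. (norm (grad (\<lambda>y. w y t) x))\<^sup>2)
        + integral \<Omega> (\<lambda>x. n x t) - 0)) \<Omega>"
    by (intro has_integral_diff has_integral_add has_integral_lap_eq_0 has_integral_transport_eq_0
        integrable_integral integrable_grad_sq has_integral_of_closure
        C21_slice(1)[OF n t bounded_domain] assms)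
  then have "((\<lambda>x. lap (\<lambda>y. w y t) x - (norm (grad (\<lambda>y. w y t) x))\<^sup>2 + n x t
        - u x t \<bullet> grad (\<lambda>y. w y t) x)
      has_integral (integral \<Omega> (\<lambda>x. n x t)
        - integral \<Omega> (\<lambda>x. (norm (grad (\<lambda>y. w y t) x))\<^sup>2))) \<Omega>"
    by (simp only: diff_0 diff_zero uminus_add_conv_diff)
  then show ?thesis
    by (rule has_integral_eq[rotated]) (use eq in \<open>simp add: algebra_simps\<close>)
qed

end

context smooth_domain
begin

lemma has_real_derivative_integral_C21:
  assumes C: "C21 \<Omega> f" and t: "t > 0"
  shows "((\<lambda>s. integral \<Omega> (\<lambda>x. f x s)) has_real_derivative integral \<Omega> (\<lambda>x. dt f x t)) (at t)"
proof -
  obtain G where G: "continuous_on (closure \<Omega> \<times> {0<..}) G"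
    "\<And>x s. x \<in> \<Omega> \<Longrightarrow> s > 0 \<Longrightarrow> G (x, s) = dt f x s"
    using C unfolding C21_def ext_cont_def by blast
  have "compact (closure \<Omega> \<times> {t/2..t+1})" using bounded_domain by (intro compact_Times) auto
  moreover have "closure \<Omega> \<times> {t/2..t+1} \<subseteq> closure \<Omega> \<times> {0<..}" using t by auto
  ultimately obtain B where B: "\<And>z. z \<in> closure \<Omega> \<times> {t/2..t+1} \<Longrightarrow> \<bar>G z\<bar> \<le> B"
    using continuous_on_compact_abs_bound continuous_on_subset[OF G(1)] by metis
  show ?thesis
  proof (rule has_real_derivative_parametric_integral[OF lmeasurable_domain, of "t / 2" t "t + 1" _ _ B])
    show "((\<lambda>s. f x s) has_real_derivative dt f x s) (at s)" if "x \<in> \<Omega>" "t / 2 < s" for x s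
    proof -
      have "(\<lambda>s. f x s) differentiable (at s)" using C that t unfolding C21_def by auto
      then show ?thesis unfolding dt_def using DERIV_deriv_iff_real_differentiable by blast
    qed
    show "\<bar>dt f x s\<bar> \<le> B" if "x \<in> \<Omega>" "t / 2 < s" "s < t + 1" for x s
      using B[of "(x, s)"] G(2)[of x s] that closure_subset t by force
    show "(\<lambda>x. f x s) integrable_on \<Omega>" if "t / 2 < s" for s
      using integrable_on_domain_closure[OF C21_slice(1)[OF C _ bounded_domain]] that t by simp
    show "t / 2 < t" "t < t + 1" using t by auto
  qed
qed

lemma continuous_on_integral_time:
  fixes P :: "pt \<Rightarrow> real \<Rightarrow> real"
  assumes "continuous_on (closure \<Omega> \<times> {a..b}) (\<lambda>(x, s). P x s)"
  shows "continuous_on {a..b} (\<lambda>s. integral \<Omega> (\<lambda>x. P x s))"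
  using bounded_domain
  by (intro continuous_on_parametric_integral[OF lmeasurable_domain _ closure_subset compact_Icc assms])
     simp

lemma continuous_on_integral_C21:
  assumes "C21 \<Omega> f" and "0 \<le> a"
  shows "continuous_on {a..b} (\<lambda>s. integral \<Omega> (\<lambda>x. f x s))"
    and "continuous_on {a..b} (\<lambda>s. integral \<Omega> (\<lambda>x. (f x s)\<^sup>2))"
proof -
  have "continuous_on (closure \<Omega> \<times> {0..}) (\<lambda>(x, t). f x t)"
    using assms(1) unfolding C21_def by blast
  then have f: "continuous_on (closure \<Omega> \<times> {a..b}) (\<lambda>(x, t). f x t)"
    by (rule continuous_on_subset) (use assms(2) in auto)
  then have "continuous_on (closure \<Omega> \<times> {a..b}) (\<lambda>z. ((\<lambda>(x, t). f x t) z)\<^sup>2)"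
    by (intro continuous_intros)
  then have "continuous_on (closure \<Omega> \<times> {a..b}) (\<lambda>(x, t). (f x t)\<^sup>2)"
    by (simp add: case_prod_beta)
  with f show "continuous_on {a..b} (\<lambda>s. integral \<Omega> (\<lambda>x. f x s))"
    and "continuous_on {a..b} (\<lambda>s. integral \<Omega> (\<lambda>x. (f x s)\<^sup>2))"
    by (simp_all add: continuous_on_integral_time)
qed

lemma continuous_on_integral_grad_sq:
  assumes C: "C21 \<Omega> w" and a: "0 < a"
  shows "continuous_on {a..b} (\<lambda>s. integral \<Omega> (\<lambda>x. (norm (grad (\<lambda>y. w y s) x))\<^sup>2))"
proof -
  have "\<forall>i. \<exists>G. continuous_on (closure \<Omega> \<times> {0<..}) G \<and>
      (\<forall>x\<in>\<Omega>. \<forall>t>0. G (x, t) = pd i (\<lambda>y. w y t) x)"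
    using C unfolding C21_def ext_cont_def by blast
  then obtain G where G: "\<And>i. continuous_on (closure \<Omega> \<times> {0<..}) (G i)"
    "\<And>i x t. x \<in> \<Omega> \<Longrightarrow> t > 0 \<Longrightarrow> G i (x, t) = pd i (\<lambda>y. w y t) x"
    by metis
  have "continuous_on (closure \<Omega> \<times> {a..b}) (\<lambda>z. \<Sum>i\<in>UNIV. (G i z)\<^sup>2)"
    by (intro continuous_intros continuous_on_subset[OF G(1)]) (use a in auto)
  then have "continuous_on {a..b} (\<lambda>s. integral \<Omega> (\<lambda>x. \<Sum>i\<in>UNIV. (G i (x, s))\<^sup>2))"
    by (intro continuous_on_integral_time) (simp add: case_prod_beta)
  moreover have "integral \<Omega> (\<lambda>x. \<Sum>i\<in>UNIV. (G i (x, s))\<^sup>2)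
      = integral \<Omega> (\<lambda>x. (norm (grad (\<lambda>y. w y s) x))\<^sup>2)" if "s \<in> {a..b}" for s
    unfolding power2_norm_eq_inner inner_vec_def grad_def
    using G(2) a that by (intro integral_cong) (simp add: power2_eq_square)
  ultimately show ?thesis by (rule continuous_on_eq) simp
qed

lemma integral_sq_le:
  fixes f :: "pt \<Rightarrow> real"
  assumes f: "f integrable_on \<Omega>" and f2: "(\<lambda>x. (f x)\<^sup>2) integrable_on \<Omega>"
    and m: "measure lebesgue \<Omega> > 0"
  shows "(integral \<Omega> f)\<^sup>2 \<le> measure lebesgue \<Omega> * integral \<Omega> (\<lambda>x. (f x)\<^sup>2)"
proof -
  let ?m = "measure lebesgue \<Omega>" and ?I = "integral \<Omega> f" and ?J = "integral \<Omega> (\<lambda>x. (f x)\<^sup>2)"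
  define c where "c = ?I / ?m"
  have one: "((\<lambda>x. 1::real) has_integral ?m) \<Omega>"
    using lmeasure_integral[OF lmeasurable_domain]
      integrable_integral[OF integrable_on_const[OF lmeasurable_domain]] by metis
  have "((\<lambda>x. (f x)\<^sup>2 - 2 * c * f x + c\<^sup>2 * 1) has_integral (?J - 2 * c * ?I + c\<^sup>2 * ?m)) \<Omega>"
    by (intro has_integral_add has_integral_diff has_integral_mult_right integrable_integral f f2 one)
  moreover have "(f x)\<^sup>2 - 2 * c * f x + c\<^sup>2 * 1 = (f x - c)\<^sup>2" for x
    by (simp add: power2_eq_square algebra_simps)
  ultimately have "((\<lambda>x. (f x - c)\<^sup>2) has_integral (?J - 2 * c * ?I + c\<^sup>2 * ?m)) \<Omega>" by simp
  then have "0 \<le> ?J - 2 * c * ?I + c\<^sup>2 * ?m" by (rule has_integral_nonneg) simp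
  also have "?J - 2 * c * ?I + c\<^sup>2 * ?m = ?J - ?I\<^sup>2 / ?m"
    unfolding c_def using m by (simp add: power2_eq_square field_simps)
  finally show ?thesis using m by (simp add: field_simps)
qed

lemma integral_pos_of_ball:
  fixes f :: "pt \<Rightarrow> real"
  assumes f: "f integrable_on \<Omega>" and nonneg: "\<And>x. x \<in> \<Omega> \<Longrightarrow> f x \<ge> 0"
    and ball: "ball z r \<subseteq> \<Omega>" "r > 0" and c: "c > 0" and "\<And>x. x \<in> ball z r \<Longrightarrow> f x \<ge> c"
  shows "integral \<Omega> f > 0"
proof -
  have "measure lebesgue (ball z r) = measure lborel (ball z r)" by (simp add: measure_completion)
  then have "measure lebesgue (ball z r) > 0" using content_ball_pos[OF ball(2)] by simp
  have "((\<lambda>x. c * 1) has_integral c * measure lebesgue (ball z r)) (ball z r)"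
    using has_integral_mult_right[OF integrable_integral[OF integrable_on_const[of "ball z r"]], of c]
      lmeasure_integral[of "ball z r"] by (metis (no_types) lmeasurable_ball)
  then have "((\<lambda>x. c) has_integral c * measure lebesgue (ball z r)) (ball z r)" by simp
  then have "((\<lambda>x. if x \<in> ball z r then c else 0) has_integral c * measure lebesgue (ball z r)) \<Omega>"
    using has_integral_restrict[of "ball z r" \<Omega> "\<lambda>x. c"] ball(1) by (simp add: Int_absorb2)
  then have "c * measure lebesgue (ball z r) \<le> integral \<Omega> f"
    by (rule has_integral_le[OF _ integrable_integral[OF f]]) (use nonneg assms(6) in auto)
  moreover have "c * measure lebesgue (ball z r) > 0"
    using c \<open>measure lebesgue (ball z r) > 0\<close> by simp
  ultimately show ?thesis by linarith
qed

end

section \<open>Scalar differential inequalities\<close>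

lemma stays_below_level:
  fixes Y Y' :: "real \<Rightarrow> real"
  assumes Yd: "\<And>s. s > 0 \<Longrightarrow> (Y has_real_derivative Y' s) (at s)"
    and neg: "\<And>s. s > 0 \<Longrightarrow> Y s > L \<Longrightarrow> Y' s < 0"
    and s1: "s1 > 0" "Y s1 \<le> L" and t: "s1 \<le> t"
  shows "Y t \<le> L"
proof (rule ccontr)
  assume "\<not> Y t \<le> L"
  then have Yt: "Y t > L" by simp
  have cont: "continuous_on {s1..t} Y"
  proof (rule continuous_at_imp_continuous_on, rule ballI)
    fix x assume "x \<in> {s1..t}"
    then have "x > 0" using s1 by auto
    then show "isCont Y x" by (rule DERIV_isCont[OF Yd])
  qed
  have dif: "\<And>x. x > 0 \<Longrightarrow> Y differentiable (at x)" using Yd real_differentiable_def by blast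
  define S where "S = {s1..t} \<inter> Y -` {..L}"
  have cS: "closed S" unfolding S_def by (rule continuous_closed_preimage[OF cont]) auto
  have neS: "S \<noteq> {}" using s1 t unfolding S_def by auto
  have bS: "bdd_above S" unfolding S_def by (rule bdd_aboveI[of _ t]) auto
  define s where "s = Sup S"
  have sS: "s \<in> S" unfolding s_def by (rule closed_contains_Sup[OF neS bS cS])
  then have s: "s1 \<le> s" "s \<le> t" "Y s \<le> L" unfolding S_def by auto
  then have st: "s < t" using Yt by (cases "s = t") auto
  have above: "Y z > L" if "s < z" "z \<le> t" for z
  proof (rule ccontr)
    assume "\<not> Y z > L"
    then have "z \<in> S" using that s unfolding S_def by auto
    then have "z \<le> s" unfolding s_def by (rule cSup_upper[OF _ bS])
    then show False using that by simp
  qed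
  obtain l z where z: "s < z" "z < t" and dz: "DERIV Y z :> l" and eq: "Y t - Y s = (t - s) * l"
  proof -
    have "continuous_on {s..t} Y" by (rule continuous_on_subset[OF cont]) (use s in auto)
    moreover have "\<And>x. s < x \<Longrightarrow> x < t \<Longrightarrow> Y differentiable (at x)" using dif s s1 by simp
    ultimately show ?thesis using MVT[OF st] that by blast
  qed
  have "l = Y' z" using DERIV_unique[OF dz Yd] z s s1 by simp
  moreover have "Y' z < 0" using neg above z s s1 by simp
  ultimately have "Y t - Y s < 0" using eq st by (simp add: mult_pos_neg)
  then show False using Yt s by linarith
qed

lemma reaches_level:
  fixes Y Y' :: "real \<Rightarrow> real"
  assumes Yd: "\<And>s. s > 0 \<Longrightarrow> (Y has_real_derivative Y' s) (at s)"
    and Ynn: "\<And>s. s > 0 \<Longrightarrow> Y s \<ge> 0"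
    and neg: "\<And>s. s > 0 \<Longrightarrow> Y s > L \<Longrightarrow> Y' s \<le> - c" and c: "c > 0"
  shows "\<exists>s1>0. Y s1 \<le> L"
proof (rule ccontr)
  assume "\<not> ?thesis"
  then have all: "\<And>s. s > 0 \<Longrightarrow> Y s > L" by (auto simp: not_le)
  define T where "T = 1 + (Y 1 + 1) / c"
  have Y1: "Y 1 \<ge> 0" using Ynn by simp
  have T1: "1 < T" unfolding T_def using c Y1 by (simp add: add_pos_nonneg)
  have cont: "continuous_on {1..T} Y"
  proof (rule continuous_at_imp_continuous_on, rule ballI)
    fix x assume "x \<in> {1..T}"
    then have "x > 0" by auto
    then show "isCont Y x" by (rule DERIV_isCont[OF Yd])
  qed
  have dif: "Y differentiable (at x)" if "1 < x" "x < T" for x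
  proof -
    have "x > 0" using that by simp
    then show ?thesis using Yd real_differentiable_def by blast
  qed
  obtain l z where z: "1 < z" "z < T" and dz: "DERIV Y z :> l" and eq: "Y T - Y 1 = (T - 1) * l"
    using MVT[OF T1 cont dif] by blast
  have "l = Y' z" using DERIV_unique[OF dz Yd] z by simp
  then have "l \<le> - c" using neg all z by simp
  then have "(T - 1) * l \<le> (T - 1) * (- c)" using T1 by (intro mult_left_mono) auto
  also have "(T - 1) * (- c) = - (Y 1 + 1)" unfolding T_def using c by simp
  finally have "Y T \<le> -1" using eq by linarith
  then show False using Ynn[of T] T1 by simp
qed

lemma logistic_rate_le:
  fixes y z r \<mu> m \<eta> K :: real
  assumes m: "m > 0" and mu: "\<mu> > 0" and eta: "\<eta> > 0" and K: "K = m * max r 0 / \<mu>"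
    and y: "y > K + \<eta>" and yz: "y\<^sup>2 \<le> m * z"
  shows "r * y - \<mu> * z \<le> - (\<mu> * \<eta> * \<eta> / m)"
proof -
  have K0: "K \<ge> 0" unfolding K using m mu by simp
  have y0: "y > 0" using y K0 eta by linarith
  have "\<mu> * (y\<^sup>2 / m) \<le> \<mu> * z" using yz m mu by (intro mult_left_mono) (auto simp: field_simps)
  then have a: "r * y - \<mu> * z \<le> y * (r - \<mu> * y / m)" by (simp add: power2_eq_square algebra_simps)
  have "\<mu> * K / m = max r 0" unfolding K using m mu by simp
  moreover have "\<mu> * y / m > \<mu> * (K + \<eta>) / m" using y m mu by (simp add: divide_strict_right_mono)
  ultimately have "\<mu> * y / m > max r 0 + \<mu> * \<eta> / m" by (simp add: algebra_simps add_divide_distrib)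
  then have b: "r - \<mu> * y / m \<le> - (\<mu> * \<eta> / m)" by linarith
  have "y * (r - \<mu> * y / m) \<le> y * (- (\<mu> * \<eta> / m))" using b y0 by (intro mult_left_mono) auto
  also have "\<dots> \<le> \<eta> * (- (\<mu> * \<eta> / m))"
    using y K0 mu m eta by (intro mult_right_mono_neg) auto
  finally show ?thesis using a by (simp add: algebra_simps)
qed

text \<open>Above \<open>K + \<eta>\<close> the rate is at most \<open>-\<mu>\<eta>\<^sup>2/m\<close>, so \<open>Y\<close> falls below \<open>K + \<eta>\<close> and
  cannot cross it again.\<close>

lemma limsup_le_of_logistic_ode:
  fixes Y Z :: "real \<Rightarrow> real"
  assumes m: "m > 0" and mu: "\<mu> > 0"
    and Yd: "\<And>s. s > 0 \<Longrightarrow> (Y has_real_derivative r * Y s - \<mu> * Z s) (at s)"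
    and Ynn: "\<And>s. s > 0 \<Longrightarrow> Y s \<ge> 0"
    and ZY: "\<And>s. s > 0 \<Longrightarrow> (Y s)\<^sup>2 \<le> m * Z s"
  shows "Limsup at_top (\<lambda>t. ereal (Y t)) \<le> ereal (m * max r 0 / \<mu>)"
proof (rule ereal_le_epsilon2)
  fix \<eta> :: real assume eta: "\<eta> > 0"
  define K where "K = m * max r 0 / \<mu>"
  define c where "c = \<mu> * \<eta> * \<eta> / m"
  have c: "c > 0" unfolding c_def using m mu eta by simp
  have neg: "r * Y s - \<mu> * Z s \<le> - c" if "s > 0" "Y s > K + \<eta>" for s
    unfolding c_def by (rule logistic_rate_le[OF m mu eta K_def that(2) ZY[OF that(1)]])
  obtain s1 where s1: "s1 > 0" "Y s1 \<le> K + \<eta>"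
    using reaches_level[OF Yd Ynn neg c] by blast
  have "Y t \<le> K + \<eta>" if "t \<ge> s1" for t
  proof (rule stays_below_level[OF Yd _ s1 that])
    fix s assume "s > 0" "Y s > K + \<eta>"
    then show "r * Y s - \<mu> * Z s < 0" using neg c by force
  qed
  then have "\<forall>\<^sub>F t in at_top. ereal (Y t) \<le> ereal (K + \<eta>)"
    unfolding eventually_at_top_linorder by auto
  then have "Limsup at_top (\<lambda>t. ereal (Y t)) \<le> ereal (K + \<eta>)" by (rule Limsup_bounded)
  then show "Limsup at_top (\<lambda>t. ereal (Y t)) \<le> ereal (m * max r 0 / \<mu>) + ereal \<eta>"
    unfolding K_def by simp
qed

lemma integral_le_of_logistic_ode:
  fixes Y Z :: "real \<Rightarrow> real"
  assumes mu: "\<mu> > 0"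
    and Yc: "\<And>T. continuous_on {0..T} Y" and Zc: "\<And>T. continuous_on {0..T} Z"
    and Yd: "\<And>s. s > 0 \<Longrightarrow> (Y has_real_derivative r * Y s - \<mu> * Z s) (at s)"
    and Ynn: "\<And>s. s \<ge> 0 \<Longrightarrow> Y s \<ge> 0"
    and t: "0 \<le> t0" "t0 < t"
  shows "integral {t0..t} Z \<le> max r 0 / \<mu> * integral {t0..t} Y + 1 / \<mu> * Y t0"
proof -
  have Yc': "continuous_on {t0..t} Y" by (rule continuous_on_subset[OF Yc[of t]]) (use t in auto)
  have Zc': "continuous_on {t0..t} Z" by (rule continuous_on_subset[OF Zc[of t]]) (use t in auto)
  have ftc: "((\<lambda>s. r * Y s - \<mu> * Z s) has_integral (Y t - Y t0)) {t0..t}"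
  proof (rule fundamental_theorem_of_calculus_interior)
    show "t0 \<le> t" using t by simp
    show "continuous_on {t0..t} Y" by (rule Yc')
    fix x assume "x \<in> {t0<..<t}"
    then have "x > 0" using t by auto
    then show "(Y has_vector_derivative r * Y x - \<mu> * Z x) (at x)"
      using Yd has_real_derivative_iff_has_vector_derivative by blast
  qed
  have YI: "(Y has_integral integral {t0..t} Y) {t0..t}"
    using integrable_integral[OF integrable_continuous_interval[OF Yc']] .
  have ZI: "(Z has_integral integral {t0..t} Z) {t0..t}"
    using integrable_integral[OF integrable_continuous_interval[OF Zc']] .
  have "((\<lambda>s. r * Y s - \<mu> * Z s) has_integral (r * integral {t0..t} Y - \<mu> * integral {t0..t} Z)) {t0..t}"
    by (intro has_integral_diff has_integral_mult_right YI ZI)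
  then have eq: "r * integral {t0..t} Y - \<mu> * integral {t0..t} Z = Y t - Y t0"
    using ftc has_integral_unique by blast
  have IY: "integral {t0..t} Y \<ge> 0"
    by (rule integral_nonneg[OF integrable_continuous_interval[OF Yc']]) (use Ynn t in auto)
  have "r * integral {t0..t} Y \<le> max r 0 * integral {t0..t} Y" using IY by (intro mult_right_mono) auto
  then have "\<mu> * integral {t0..t} Z \<le> max r 0 * integral {t0..t} Y + Y t0"
    using eq Ynn[of t] t by linarith
  then show ?thesis using mu by (simp add: field_simps)
qed

lemma inverse_ge_of_riccati_inequality:
  fixes Y Y' :: "real \<Rightarrow> real"
  assumes "a \<le> b" and cont: "continuous_on {a..b} Y"
    and Y': "\<And>s. a < s \<Longrightarrow> s < b \<Longrightarrow> (Y has_real_derivative Y' s) (at s)"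
    and pos: "\<And>s. a \<le> s \<Longrightarrow> s \<le> b \<Longrightarrow> Y s > 0"
    and le: "\<And>s. a < s \<Longrightarrow> s < b \<Longrightarrow> Y' s \<le> - c * (Y s)\<^sup>2"
  shows "inverse (Y a) + c * (b - a) \<le> inverse (Y b)"
proof -
  define V where "V s = inverse (Y s) - c * s" for s
  have "V a \<le> V b"
  proof (rule DERIV_nonneg_imp_increasing_open[OF \<open>a \<le> b\<close>])
    show "continuous_on {a..b} V"
      unfolding V_def[abs_def] using pos by (intro continuous_intros cont) force
    fix x assume x: "a < x" "x < b"
    have Yx: "Y x > 0" using pos x by simp
    have V': "(V has_real_derivative - (Y' x * inverse (Y x ^ Suc (Suc 0))) - c) (at x)"
      unfolding V_def[abs_def]
      using DERIV_diff[OF DERIV_inverse_fun[OF Y'[OF x]] DERIV_cmult[OF DERIV_ident, of c]] Yx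
      by simp
    have "Y' x * inverse ((Y x)\<^sup>2) \<le> - c * (Y x)\<^sup>2 * inverse ((Y x)\<^sup>2)"
      using le[OF x] Yx by (intro mult_right_mono) auto
    moreover have "c * (Y x)\<^sup>2 * inverse ((Y x)\<^sup>2) = c" using Yx by simp
    ultimately have "0 \<le> - (Y' x * inverse (Y x ^ Suc (Suc 0))) - c"
      by (simp add: numeral_2_eq_2[symmetric])
    then show "\<exists>y. DERIV V x :> y \<and> 0 \<le> y" using V' by blast
  qed
  then show ?thesis unfolding V_def by (simp add: algebra_simps)
qed

lemma decay_of_logistic_ode:
  fixes Y Z :: "real \<Rightarrow> real"
  assumes m: "m > 0" and mu: "\<mu> > 0" and r: "r \<le> 0"
    and Yc: "\<And>T. continuous_on {0..T} Y"
    and Yd: "\<And>s. s > 0 \<Longrightarrow> (Y has_real_derivative r * Y s - \<mu> * Z s) (at s)"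
    and Ynn: "\<And>s. s \<ge> 0 \<Longrightarrow> Y s \<ge> 0"
    and ZY: "\<And>s. s > 0 \<Longrightarrow> (Y s)\<^sup>2 \<le> m * Z s"
    and Y0: "Y 0 > 0" and t: "t > 0"
  shows "Y t \<le> m / (\<mu> * (t + m / (\<mu> * Y 0)))"
proof (cases "Y t > 0")
  case True
  have rate: "r * Y s - \<mu> * Z s \<le> - (\<mu> / m) * (Y s)\<^sup>2" if "s > 0" for s
  proof -
    have "\<mu> / m * (Y s)\<^sup>2 \<le> \<mu> * Z s"
      using mult_left_mono[OF ZY[OF that], of "\<mu> / m"] m mu by (simp add: field_simps)
    moreover have "r * Y s \<le> 0" using r Ynn[of s] that by (simp add: mult_nonpos_nonneg)
    ultimately show ?thesis by simp
  qed
  have "Y s > 0" if "0 \<le> s" "s \<le> t" for s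
  proof -
    have "Y t \<le> Y s"
    proof (rule DERIV_nonpos_imp_decreasing_open[OF that(2)])
      show "continuous_on {s..t} Y" by (rule continuous_on_subset[OF Yc[of t]]) (use that in auto)
      fix x assume "s < x" "x < t"
      then have "0 < x" using that by simp
      moreover have "0 \<le> \<mu> / m * (Y x)\<^sup>2" using m mu by simp
      ultimately show "\<exists>y. DERIV Y x :> y \<and> y \<le> 0"
        using Yd rate[of x] by (intro exI[of _ "r * Y x - \<mu> * Z x"]) auto
    qed
    then show ?thesis using True by simp
  qed
  then have "inverse (Y 0) + \<mu> / m * (t - 0) \<le> inverse (Y t)"
    using t rate by (intro inverse_ge_of_riccati_inequality[where Y' = "\<lambda>s. r * Y s - \<mu> * Z s"] Yc Yd)
      auto
  moreover have "inverse (Y 0) + \<mu> / m * t = inverse (m / (\<mu> * (t + m / (\<mu> * Y 0))))"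
    using m mu Y0 t by (simp add: field_simps add_pos_pos)
  ultimately have "inverse (m / (\<mu> * (t + m / (\<mu> * Y 0)))) \<le> inverse (Y t)" by simp
  moreover have "m / (\<mu> * (t + m / (\<mu> * Y 0))) > 0" using m mu Y0 t by (simp add: add_pos_pos)
  ultimately show ?thesis by (rule inverse_le_imp_le)
next
  case False
  moreover have "m / (\<mu> * (t + m / (\<mu> * Y 0))) > 0" using m mu Y0 t by (simp add: add_pos_pos)
  ultimately show ?thesis by linarith
qed

lemma integral_Icc_le_of_bounds:
  fixes g M :: "real \<Rightarrow> real"
  assumes "a < c" and "c < b"
    and g_nonneg: "\<And>s. a < s \<Longrightarrow> s \<le> b \<Longrightarrow> 0 \<le> g s"
    and g_cont: "\<And>c. a < c \<Longrightarrow> continuous_on {c..b} g"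
    and bound: "\<And>c. a < c \<Longrightarrow> c < b \<Longrightarrow> integral {c..b} g \<le> M c"
    and M_cont: "continuous_on {a..b} M"
  shows "integral {c..b} g \<le> M a"
proof (rule tendsto_lowerbound)
  have "at_right a = at a within {a..b}"
    by (rule at_within_nhd[of _ "{..<b}"]) (use assms(1,2) in auto)
  then show "(M \<longlongrightarrow> M a) (at_right a)"
    using M_cont assms(1,2) unfolding continuous_on_def by simp
  have le: "integral {c..b} g \<le> M c'" if "a < c'" "c' < c" for c'
  proof -
    have "integral {c..b} g \<le> integral {c'..b} g"
    proof (rule integral_subset_le)
      show "g integrable_on {c..b}" "g integrable_on {c'..b}"
        using integrable_continuous_interval[OF g_cont] that assms(1) by auto
    qed (use that g_nonneg in auto)
    also have "\<dots> \<le> M c'" using bound that assms(1,2) by simp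
    finally show ?thesis .
  qed
  show "\<forall>\<^sub>F c' in at_right a. integral {c..b} g \<le> M c'"
    using eventually_at_right_real[OF \<open>a < c\<close>] by (rule eventually_mono) (simp add: le)
qed simp

lemma SUP_indicator_Icc:
  fixes c :: "nat \<Rightarrow> real" and f :: "real \<Rightarrow> ennreal"
  assumes "c \<longlonglongrightarrow> a" and "\<And>k. a < c k"
  shows "(SUP k. f s * indicator {c k..b} s) = f s * indicator {a<..b} s"
proof (cases "a < s \<and> s \<le> b")
  case True
  obtain k where "c k < s"
    using order_tendstoD(2)[OF assms(1), of s] True by (auto simp: eventually_sequentially)
  then have "f s \<le> (SUP k. f s * indicator {c k..b} s)"
    using True by (intro SUP_upper2[of k]) (auto simp: indicator_def)
  moreover have "(SUP k. f s * indicator {c k..b} s) \<le> f s"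
    by (intro SUP_least) (simp add: indicator_def)
  ultimately show ?thesis using True by simp
next
  case False
  then have zero: "f s * indicator {c k..b} s = 0" for k using assms(2)[of k] by auto
  have "(SUP k. f s * indicator {c k..b} s) = 0" by (simp only: zero) simp
  then show ?thesis using False by simp
qed

text \<open>Monotone convergence from the integrals over \<open>[c, b]\<close> as \<open>c\<close> decreases to \<open>a\<close>;
  continuity of \<open>M\<close> at \<open>a\<close> carries the bounds to the limit.\<close>

lemma nn_integral_le_of_integral_bounds:
  fixes g M :: "real \<Rightarrow> real" and \<Phi> :: "real \<Rightarrow> ennreal"
  assumes "a < b"
    and \<Phi>: "\<And>s. a < s \<Longrightarrow> s \<le> b \<Longrightarrow> \<Phi> s = ennreal (g s)"
    and g_nonneg: "\<And>s. a < s \<Longrightarrow> s \<le> b \<Longrightarrow> 0 \<le> g s"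
    and g_cont: "\<And>c. a < c \<Longrightarrow> continuous_on {c..b} g"
    and bound: "\<And>c. a < c \<Longrightarrow> c < b \<Longrightarrow> integral {c..b} g \<le> M c"
    and M_cont: "continuous_on {a..b} M"
  shows "(\<integral>\<^sup>+ s\<in>{a..b}. \<Phi> s \<partial>lborel) \<le> ennreal (M a)"
proof -
  define c where "c k = a + (b - a) / real (k + 2)" for k :: nat
  have c: "a < c k" "c k < b" for k
  proof -
    have "(b - a) / real (k + 2) < (b - a) / 1"
      using \<open>a < b\<close> by (intro divide_strict_left_mono) auto
    then show "a < c k" "c k < b" using \<open>a < b\<close> by (auto simp: c_def)
  qed
  have "(\<lambda>k. a + (b - a) * (1 / real (Suc (Suc k)))) \<longlonglongrightarrow> a + 0"
    by (intro tendsto_add tendsto_const tendsto_mult_right_zero LIMSEQ_Suc lim_1_over_n)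
  then have "c \<longlonglongrightarrow> a" by (simp add: c_def[abs_def] numeral_2_eq_2)
  define f where "f k s = ennreal (g s) * indicator {c k..b} s" for k s
  have "incseq f"
  proof (rule incseq_SucI, rule le_funI)
    fix k s
    have "c (Suc k) \<le> c k" using \<open>a < b\<close> by (simp add: c_def frac_le)
    then show "f k s \<le> f (Suc k) s" unfolding f_def
      by (intro mult_left_mono) (auto simp: indicator_def)
  qed
  moreover have "f k \<in> borel_measurable lborel" for k
  proof -
    have "(\<lambda>s. indicator {c k..b} s *\<^sub>R g s) \<in> borel_measurable borel"
      by (rule borel_measurable_continuous_on_indicator) (use g_cont c in auto)
    then have "(\<lambda>s. ennreal (indicator {c k..b} s *\<^sub>R g s)) \<in> borel_measurable borel"
      by measurable
    moreover have "f k = (\<lambda>s. ennreal (indicator {c k..b} s *\<^sub>R g s))"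
      unfolding f_def by (auto simp: indicator_def)
    ultimately show ?thesis by simp
  qed
  ultimately have "(\<integral>\<^sup>+ s. (SUP k. f k s) \<partial>lborel) = (SUP k. \<integral>\<^sup>+ s. f k s \<partial>lborel)"
    by (rule nn_integral_monotone_convergence_SUP)
  also have "\<dots> \<le> ennreal (M a)"
  proof (rule SUP_least)
    fix k
    have "(\<integral>\<^sup>+ s. f k s \<partial>lborel) = ennreal (integral {c k..b} g)"
      unfolding f_def using c[of k] g_nonneg
      by (intro nn_integral_has_integral_lebesgue' integrable_integral
          integrable_continuous_interval g_cont) auto
    then show "(\<integral>\<^sup>+ s. f k s \<partial>lborel) \<le> ennreal (M a)"
      using integral_Icc_le_of_bounds[OF c g_nonneg g_cont bound M_cont] by (simp add: ennreal_leI)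
  qed
  also have "(\<integral>\<^sup>+ s. (SUP k. f k s) \<partial>lborel) = (\<integral>\<^sup>+ s\<in>{a..b}. \<Phi> s \<partial>lborel)"
  proof (rule nn_integral_cong_AE)
    have "(SUP k. f k s) = \<Phi> s * indicator {a..b} s" if "s \<noteq> a" for s
      using SUP_indicator_Icc[OF \<open>c \<longlonglongrightarrow> a\<close> c(1), of "\<lambda>s. ennreal (g s)" s b] that \<Phi>[of s]
      unfolding f_def by (auto simp: indicator_def)
    then show "AE s in lborel. (SUP k. f k s) = \<Phi> s * indicator {a..b} s"
      using AE_lborel_singleton[of a] by (rule_tac eventually_mono) auto
  qed
  finally show ?thesis .
qed

section \<open>Integral identities for classical solutions\<close>

locale chemotaxis_solution = smooth_domain +
  fixes \<phi> n0 :: "pt \<Rightarrow> real" and n w P :: "pt \<Rightarrow> real \<Rightarrow> real" and u :: "pt \<Rightarrow> real \<Rightarrow> pt"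
    and chi r \<mu> :: real
  assumes solution: "classical_solution \<Omega> \<phi> chi r \<mu> n0 n w u P"
    and outward_normal_eq: "\<And>x. x \<in> frontier \<Omega> \<Longrightarrow> outward_normal \<Omega> x = (1 / norm (grad \<rho> x)) *\<^sub>R grad \<rho> x"
    and domain_nonempty: "\<Omega> \<noteq> {}"
    and mu_pos: "\<mu> > 0"
    and n0_nonneg: "\<forall>x\<in>closure \<Omega>. n0 x \<ge> 0"
    and n_nonneg: "\<forall>x\<in>\<Omega>. \<forall>t>0. n x t \<ge> 0"
    and w_nonneg: "\<forall>x\<in>\<Omega>. \<forall>t>0. w x t \<ge> 0"
begin

definition n_integral :: "real \<Rightarrow> real" where
  "n_integral t = integral \<Omega> (\<lambda>x. n x t)"

definition n_sq_integral :: "real \<Rightarrow> real" where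
  "n_sq_integral t = integral \<Omega> (\<lambda>x. (n x t)\<^sup>2)"

definition w_integral :: "real \<Rightarrow> real" where
  "w_integral t = integral \<Omega> (\<lambda>x. w x t)"

definition grad_w_sq_integral :: "real \<Rightarrow> real" where
  "grad_w_sq_integral t = integral \<Omega> (\<lambda>x. (norm (grad (\<lambda>y. w y t) x))\<^sup>2)"

lemma C21_n: "C21 \<Omega> n" and C21_w: "C21 \<Omega> w" and C21_u: "C21 \<Omega> (ucomp u i)"
  using solution unfolding classical_solution_def by auto

lemma zero_normal_trace_grad_n: "t > 0 \<Longrightarrow> zero_normal_trace (grad (\<lambda>y. n y t))"
  and zero_normal_trace_grad_w: "t > 0 \<Longrightarrow> zero_normal_trace (grad (\<lambda>y. w y t))"
  using solution outward_normal_eq unfolding classical_solution_def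
  by (auto intro!: zero_normal_trace_of_normal[where \<nu> = "outward_normal \<Omega>"])

lemma n_integral_has_derivative:
  assumes "t > 0"
  shows "(n_integral has_real_derivative r * n_integral t - \<mu> * n_sq_integral t) (at t)"
proof -
  have "((\<lambda>x. dt n x t) has_integral r * n_integral t - \<mu> * n_sq_integral t) \<Omega>"
    unfolding n_integral_def n_sq_integral_def
    using solution assms unfolding classical_solution_def
    by (intro has_integral_dt_n[OF C21_n C21_w C21_u assms] zero_normal_trace_grad_n
        zero_normal_trace_grad_w) auto
  then show ?thesis
    using has_real_derivative_integral_C21[OF C21_n assms] integral_unique
    unfolding n_integral_def[abs_def] by metis
qed

lemma w_integral_has_derivative:
  assumes "t > 0"
  shows "(w_integral has_real_derivative n_integral t - grad_w_sq_integral t) (at t)"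
proof -
  have "((\<lambda>x. dt w x t) has_integral n_integral t - grad_w_sq_integral t) \<Omega>"
    unfolding n_integral_def grad_w_sq_integral_def
    using solution assms unfolding classical_solution_def
    by (intro has_integral_dt_w[OF C21_n C21_w C21_u assms] zero_normal_trace_grad_w) auto
  then show ?thesis
    using has_real_derivative_integral_C21[OF C21_w assms] integral_unique
    unfolding w_integral_def[abs_def] by metis
qed

lemma n_nonneg_closed:
  assumes "x \<in> \<Omega>" and "0 \<le> t"
  shows "0 \<le> n x t"
proof (cases "t = 0")
  case True
  have "x \<in> closure \<Omega>" using assms(1) closure_subset by blast
  then show ?thesis using True n0_nonneg solution unfolding classical_solution_def by auto
qed (use assms n_nonneg in auto)

lemma integrable_n: "0 \<le> t \<Longrightarrow> (\<lambda>x. n x t) integrable_on \<Omega>"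
  and integrable_n_sq: "0 \<le> t \<Longrightarrow> (\<lambda>x. (n x t)\<^sup>2) integrable_on \<Omega>"
proof -
  assume "0 \<le> t"
  have "continuous_on (closure \<Omega> \<times> {0..}) (\<lambda>(x, t). n x t)"
    using C21_n unfolding C21_def by blast
  then have "continuous_on (closure \<Omega>) (\<lambda>x. (\<lambda>(x, t). n x t) (x, t))"
    by (rule continuous_on_compose2) (use \<open>0 \<le> t\<close> in \<open>auto intro!: continuous_intros\<close>)
  then have "continuous_on (closure \<Omega>) (\<lambda>x. n x t)" by simp
  then show "(\<lambda>x. n x t) integrable_on \<Omega>" and "(\<lambda>x. (n x t)\<^sup>2) integrable_on \<Omega>"
    by (auto intro!: integrable_on_domain_closure continuous_intros)
qed

lemma n_integral_nonneg: "0 \<le> t \<Longrightarrow> 0 \<le> n_integral t"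
  unfolding n_integral_def by (rule integral_nonneg[OF integrable_n]) (auto intro: n_nonneg_closed)

lemma w_integral_nonneg: "0 < t \<Longrightarrow> 0 \<le> w_integral t"
  unfolding w_integral_def
  using w_nonneg integrable_on_domain_closure[OF C21_slice(1)[OF C21_w _ bounded_domain]]
  by (intro integral_nonneg) auto

lemma grad_w_sq_integral_nonneg: "0 < t \<Longrightarrow> 0 \<le> grad_w_sq_integral t"
  unfolding grad_w_sq_integral_def
  by (intro integral_nonneg integrable_grad_sq[OF C21_w]) auto

lemma continuous_on_n_integral: "continuous_on {0..T} n_integral"
  and continuous_on_n_sq_integral: "continuous_on {0..T} n_sq_integral"
  and continuous_on_w_integral: "continuous_on {0..T} w_integral"
  using continuous_on_integral_C21[OF C21_n, of 0 T] continuous_on_integral_C21(1)[OF C21_w, of 0 T]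
  unfolding n_integral_def[abs_def] n_sq_integral_def[abs_def] w_integral_def[abs_def] by auto

lemma continuous_on_grad_w_sq_integral: "0 < a \<Longrightarrow> continuous_on {a..b} grad_w_sq_integral"
  unfolding grad_w_sq_integral_def[abs_def] by (rule continuous_on_integral_grad_sq[OF C21_w])

lemma measure_domain_pos: "measure lebesgue \<Omega> > 0"
proof -
  obtain z r where "r > 0" "ball z r \<subseteq> \<Omega>"
    using domain_nonempty open_domain open_contains_ball by blast
  then have "integral \<Omega> (\<lambda>x. 1::real) > 0"
    by (intro integral_pos_of_ball[OF integrable_on_const[OF lmeasurable_domain], where z=z and r=r and c=1]) auto
  then show ?thesis using lmeasure_integral[OF lmeasurable_domain] by simp
qed

lemma n_integral_sq_le: "0 \<le> t \<Longrightarrow> (n_integral t)\<^sup>2 \<le> measure lebesgue \<Omega> * n_sq_integral t"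
  unfolding n_integral_def n_sq_integral_def
  by (intro integral_sq_le integrable_n integrable_n_sq measure_domain_pos)

lemma n_integral_0: "n_integral 0 = integral \<Omega> n0"
  using solution closure_subset unfolding n_integral_def classical_solution_def
  by (intro integral_cong) auto

lemma n_integral_0_pos:
  assumes n0_cont: "continuous_on (closure \<Omega>) n0" and "\<exists>x\<in>closure \<Omega>. n0 x \<noteq> 0"
  shows "n_integral 0 > 0"
proof -
  obtain x0 where x0: "x0 \<in> closure \<Omega>" "n0 x0 > 0"
    using assms(2) n0_nonneg by force
  obtain \<delta> where "\<delta> > 0"
    and \<delta>: "\<And>y. y \<in> closure \<Omega> \<Longrightarrow> dist y x0 < \<delta> \<Longrightarrow> dist (n0 y) (n0 x0) < n0 x0 / 2"
    using n0_cont x0 unfolding continuous_on_iff by (metis half_gt_zero)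
  obtain x1 where x1: "x1 \<in> \<Omega>" "dist x1 x0 < \<delta> / 2"
    using x0(1) \<open>\<delta> > 0\<close> unfolding closure_approachable by (metis half_gt_zero dist_commute)
  obtain r where r: "r > 0" "ball x1 r \<subseteq> \<Omega>" using open_domain x1(1) open_contains_ball by blast
  have "n0 y \<ge> n0 x0 / 2" if "y \<in> ball x1 (min r (\<delta> / 2))" for y
  proof -
    have "dist y x0 < \<delta>" using that x1(2) dist_triangle[of y x0 x1] by (simp add: dist_commute)
    then have "\<bar>n0 y - n0 x0\<bar> < n0 x0 / 2"
      using \<delta> that r closure_subset by (force simp: dist_real_def)
    then show ?thesis by linarith
  qed
  then have "integral \<Omega> n0 > 0"
    using n0_nonneg closure_subset r x0(2) \<open>\<delta> > 0\<close>
    by (intro integral_pos_of_ball[OF integrable_on_domain_closure[OF n0_cont],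
          where z=x1 and r="min r (\<delta> / 2)" and c="n0 x0 / 2"])
      auto
  then show ?thesis by (simp add: n_integral_0)
qed

end

context chemotaxis_solution
begin

lemma integral_abs_n: "0 \<le> t \<Longrightarrow> integral \<Omega> (\<lambda>x. \<bar>n x t\<bar>) = n_integral t"
  unfolding n_integral_def by (intro integral_cong) (simp add: n_nonneg_closed)

lemma integral_time_integral_abs_n:
  "0 \<le> t0 \<Longrightarrow> integral {t0..t} (\<lambda>s. integral \<Omega> (\<lambda>x. \<bar>n x s\<bar>)) = integral {t0..t} n_integral"
  by (intro integral_cong) (simp add: integral_abs_n)

lemma limsup_integral_abs_n:
  "Limsup at_top (\<lambda>t. ereal (integral \<Omega> (\<lambda>x. \<bar>n x t\<bar>)))
     \<le> ereal (measure lebesgue \<Omega> * max r 0 / \<mu>)"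
proof -
  have "Limsup at_top (\<lambda>t. ereal (integral \<Omega> (\<lambda>x. \<bar>n x t\<bar>))) = Limsup at_top (\<lambda>t. ereal (n_integral t))"
    by (rule Limsup_eq) (auto simp: integral_abs_n eventually_at_top_linorder intro: exI[of _ 0])
  also have "\<dots> \<le> ereal (measure lebesgue \<Omega> * max r 0 / \<mu>)"
    using n_integral_nonneg n_integral_sq_le
    by (intro limsup_le_of_logistic_ode[OF measure_domain_pos mu_pos n_integral_has_derivative]) auto
  finally show ?thesis .
qed

lemma integral_n_sq_le:
  assumes "0 \<le> t0" and "t0 < t"
  shows "integral {t0..t} (\<lambda>s. integral \<Omega> (\<lambda>x. \<bar>n x s\<bar>\<^sup>2))
    \<le> max r 0 / \<mu> * integral {t0..t} (\<lambda>s. integral \<Omega> (\<lambda>x. \<bar>n x s\<bar>))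
      + 1 / \<mu> * integral \<Omega> (\<lambda>x. \<bar>n x t0\<bar>)"
  using integral_le_of_logistic_ode[OF mu_pos continuous_on_n_integral continuous_on_n_sq_integral
      n_integral_has_derivative n_integral_nonneg assms]
  by (simp add: integral_abs_n integral_time_integral_abs_n assms n_sq_integral_def[symmetric])

lemma integral_grad_w_sq_le:
  assumes "0 \<le> t0" and "t0 < c" and "c \<le> t"
  shows "integral {c..t} grad_w_sq_integral \<le> w_integral c + integral {t0..t} n_integral"
proof -
  have "0 < c" using assms by simp
  have n_int: "n_integral integrable_on {c..t}"
    by (rule integrable_continuous_interval[OF continuous_on_subset[OF continuous_on_n_integral]])
       (use \<open>0 < c\<close> in auto)
  have g_int: "grad_w_sq_integral integrable_on {c..t}"
    by (rule integrable_continuous_interval[OF continuous_on_grad_w_sq_integral[OF \<open>0 < c\<close>]])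
  have "((\<lambda>s. n_integral s - grad_w_sq_integral s) has_integral w_integral t - w_integral c) {c..t}"
  proof (rule fundamental_theorem_of_calculus_interior)
    show "continuous_on {c..t} w_integral"
      by (rule continuous_on_subset[OF continuous_on_w_integral]) (use \<open>0 < c\<close> in auto)
    show "(w_integral has_vector_derivative n_integral s - grad_w_sq_integral s) (at s)"
      if "s \<in> {c<..<t}" for s
      using w_integral_has_derivative[of s] that \<open>0 < c\<close>
      by (simp add: has_real_derivative_iff_has_vector_derivative)
  qed (use assms in auto)
  then have "integral {c..t} n_integral - integral {c..t} grad_w_sq_integral = w_integral t - w_integral c"
    using integral_diff[OF n_int g_int] integral_unique by metis
  moreover have "integral {c..t} n_integral \<le> integral {t0..t} n_integral"
    using assms n_integral_nonneg
    by (intro integral_subset_le n_int integrable_continuous_interval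
        continuous_on_subset[OF continuous_on_n_integral]) auto
  moreover have "0 \<le> w_integral t" using assms by (intro w_integral_nonneg) simp
  ultimately show ?thesis by linarith
qed

lemma nn_integral_grad_w_sq_le:
  assumes "0 \<le> t0" and "t0 < t"
  shows "(\<integral>\<^sup>+ s\<in>{t0..t}. (\<integral>\<^sup>+ x\<in>\<Omega>. ennreal ((norm (grad (\<lambda>y. w y s) x))\<^sup>2) \<partial>lborel) \<partial>lborel)
    \<le> ennreal (integral \<Omega> (\<lambda>x. w x t0) + integral {t0..t} (\<lambda>s. integral \<Omega> (\<lambda>x. \<bar>n x s\<bar>)))"
proof -
  have "(\<integral>\<^sup>+ s\<in>{t0..t}. (\<integral>\<^sup>+ x\<in>\<Omega>. ennreal ((norm (grad (\<lambda>y. w y s) x))\<^sup>2) \<partial>lborel) \<partial>lborel)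
      \<le> ennreal ((\<lambda>c. w_integral c + integral {t0..t} n_integral) t0)"
  proof (rule nn_integral_le_of_integral_bounds[OF \<open>t0 < t\<close>,
        where M = "\<lambda>c. w_integral c + integral {t0..t} n_integral"])
    show "(\<integral>\<^sup>+ x\<in>\<Omega>. ennreal ((norm (grad (\<lambda>y. w y s) x))\<^sup>2) \<partial>lborel) = ennreal (grad_w_sq_integral s)"
      if "t0 < s" "s \<le> t" for s
      unfolding grad_w_sq_integral_def
      using assms that integrable_grad_sq[OF C21_w, of s]
      by (intro nn_integral_has_integral_lebesgue' integrable_integral) auto
    show "0 \<le> grad_w_sq_integral s" if "t0 < s" "s \<le> t" for s
      using assms that by (intro grad_w_sq_integral_nonneg) simp
    show "continuous_on {c..t} grad_w_sq_integral" if "t0 < c" for c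
      using assms that by (intro continuous_on_grad_w_sq_integral) simp
    show "integral {c..t} grad_w_sq_integral \<le> w_integral c + integral {t0..t} n_integral"
      if "t0 < c" "c < t" for c
      using assms that by (intro integral_grad_w_sq_le) auto
    show "continuous_on {t0..t} (\<lambda>c. w_integral c + integral {t0..t} n_integral)"
      using assms by (intro continuous_intros continuous_on_subset[OF continuous_on_w_integral]) auto
  qed
  then show ?thesis
    using assms by (simp add: w_integral_def integral_time_integral_abs_n)
qed

lemma integral_abs_n_decay:
  assumes "r \<le> 0" and "continuous_on (closure \<Omega>) n0" and "\<exists>x\<in>closure \<Omega>. n0 x \<noteq> 0" and "t > 0"
  shows "integral \<Omega> (\<lambda>x. \<bar>n x t\<bar>)
    \<le> measure lebesgue \<Omega> / (\<mu> * (t + measure lebesgue \<Omega> / (\<mu> * integral \<Omega> n0)))"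
  using decay_of_logistic_ode[OF measure_domain_pos mu_pos assms(1) continuous_on_n_integral
      n_integral_has_derivative n_integral_nonneg _ n_integral_0_pos[OF assms(2,3)] assms(4)]
    n_integral_sq_le assms(4)
  by (simp add: integral_abs_n n_integral_0)

end

lemma smooth_bounded_domain_imp_smooth_domain:
  assumes "smooth_bounded_domain \<Omega>"
  obtains D where "smooth_domain \<Omega> (SOME \<rho>. defining_function \<Omega> \<rho>) D"
proof -
  define \<rho> where "\<rho> = (SOME \<rho>. defining_function \<Omega> \<rho>)"
  have "\<exists>\<rho>. defining_function \<Omega> \<rho>" using assms unfolding smooth_bounded_domain_def by blast
  then have df: "defining_function \<Omega> \<rho>" unfolding \<rho>_def by (rule someI_ex)
  then obtain D where D: "D [] = \<rho>" "\<And>ks. continuous_on UNIV (D ks)"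
    "\<And>ks i x. has_pd i (D ks) x (D (i # ks) x)"
    unfolding defining_function_def smooth_fun_def by blast
  have "smooth_domain \<Omega> \<rho> D"
  proof
    show "open \<Omega>" "bounded \<Omega>" using assms unfolding smooth_bounded_domain_def by auto
    show "\<Omega> = {x. \<rho> x < 0}" "\<And>x. \<rho> x = 0 \<Longrightarrow> grad \<rho> x \<noteq> 0"
      using df unfolding defining_function_def by auto
  qed (use D in auto)
  then show ?thesis unfolding \<rho>_def by (rule that)
qed

theorem lemma2p3:
  fixes \<Omega> :: "(real ^ 2) set"
    and \<phi> n0 :: "real ^ 2 \<Rightarrow> real"
    and n w P :: "real ^ 2 \<Rightarrow> real \<Rightarrow> real"
    and u :: "real ^ 2 \<Rightarrow> real \<Rightarrow> real ^ 2"
    and chi r \<mu> :: real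
  assumes dom: "smooth_bounded_domain \<Omega>"
    and phi: "W1inf \<Omega> \<phi>"
    and chi: "chi > 0"
    and mu: "\<mu> > 0"
    and n0_cont: "continuous_on (closure \<Omega>) n0"
    and n0_nonneg: "\<forall>x\<in>closure \<Omega>. n0 x \<ge> 0"
    and n0_nonzero: "\<exists>x\<in>closure \<Omega>. n0 x \<noteq> 0"
    and sol: "classical_solution \<Omega> \<phi> chi r \<mu> n0 n w u P"
    and n_nonneg: "\<forall>x\<in>\<Omega>. \<forall>t>0. n x t \<ge> 0"
    and w_nonneg: "\<forall>x\<in>\<Omega>. \<forall>t>0. w x t \<ge> 0"
  shows "(Limsup at_top (\<lambda>t. ereal (integral \<Omega> (\<lambda>x. \<bar>n x t\<bar>)))
           \<le> ereal (measure lebesgue \<Omega> * max r 0 / \<mu>)) \<and>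
     (\<forall>t0 t. 0 \<le> t0 \<and> t0 < t \<longrightarrow>
           integral {t0..t} (\<lambda>s. integral \<Omega> (\<lambda>x. \<bar>n x s\<bar>\<^sup>2))
             \<le> max r 0 / \<mu> * integral {t0..t} (\<lambda>s. integral \<Omega> (\<lambda>x. \<bar>n x s\<bar>))
               + 1 / \<mu> * integral \<Omega> (\<lambda>x. \<bar>n x t0\<bar>)) \<and>
     (\<forall>t0 t. 0 \<le> t0 \<and> t0 < t \<longrightarrow>
           (\<integral>\<^sup>+ s\<in>{t0..t}. (\<integral>\<^sup>+ x\<in>\<Omega>. ennreal ((norm (grad (\<lambda>y. w y s) x))\<^sup>2) \<partial>lborel) \<partial>lborel)
             \<le> ennreal (integral \<Omega> (\<lambda>x. w x t0)
                        + integral {t0..t} (\<lambda>s. integral \<Omega> (\<lambda>x. \<bar>n x s\<bar>)))) \<and>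
     (r \<le> 0 \<longrightarrow>
           (\<forall>t>0. integral \<Omega> (\<lambda>x. \<bar>n x t\<bar>)
              \<le> measure lebesgue \<Omega> /
                 (\<mu> * (t + measure lebesgue \<Omega> / (\<mu> * integral \<Omega> n0)))))"
proof -
  define \<rho> where "\<rho> = (SOME \<rho>. defining_function \<Omega> \<rho>)"
  obtain D where "smooth_domain \<Omega> \<rho> D"
    using smooth_bounded_domain_imp_smooth_domain[OF dom] unfolding \<rho>_def by blast
  moreover have "\<Omega> \<noteq> {}" using dom unfolding smooth_bounded_domain_def by blast
  ultimately interpret chemotaxis_solution \<Omega> \<rho> D \<phi> n0 n w P u chi r \<mu>
    using sol mu n0_nonneg n_nonneg w_nonneg
    by (intro chemotaxis_solution.intro chemotaxis_solution_axioms.intro)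
       (simp_all add: outward_normal_def Let_def \<rho>_def)
  show ?thesis
    using limsup_integral_abs_n integral_n_sq_le nn_integral_grad_w_sq_le
      integral_abs_n_decay[OF _ n0_cont n0_nonzero]
    by blast
qed

end
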